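(* Let the outage probability of energy harvesting decode-and-forward cooperation with a randomly chosen relay be $$\mathcal{P}=\mathcal{P}(N=0,\ x_0<\epsilon)+\mathcal{P}(N\ge 1)\,\mathcal{P}\big(x_0+\eta y_i(x_i-\epsilon)<\epsilon,\ x_i>\epsilon\,\big|\,N\ge1\big)+\mathcal{P}\big(x_0<\epsilon,\ x_i<\epsilon,\ N\ge1\big),$$ where, when $N\ge 1$, $i$ is a relay chosen uniformly at random among the $N$ relays. Then $$\mathcal{P}=\big(1-e^{-(1+d^\alpha)\epsilon}\big)e^{-\pi R_{\mathcal D}^2\lambda}+\frac{1-e^{-\pi R_{\mathcal D}^2\lambda}}{\pi R_{\mathcal D}^2}\int_0^{\epsilon}\int_0^{R_{\mathcal D}}\int_0^{2\pi}e^{-(1+r^\alpha)\epsilon}\Big(1-2q(r,\theta)\,K_1\big(2q(r,\theta)\big)\Big)\,r\,d\theta\,dr\,f_{x_0}(x_0)\,dx_0$$ $$+\frac{2\big(1-e^{-\pi R_{\mathcal D}^2\lambda}\big)}{R_{\mathcal D}^2}\int_0^{R_{\mathcal D}}\big(1-e^{-(1+d^\alpha)\epsilon}\big)\big(1-e^{-(1+r^\alpha)\epsilon}\big)\,r\,dr,$$ where $f_{x_0}(x_0)=(1+d^\alpha)e^{-(1+d^\alpha)x_0}$ is the density of $x_0$, $K_1$ is the modified Bessel function of the second kind of order one, and $$q(r,\theta)=\sqrt{\frac{\big(1+(r^2+d^2-2rd\cos\theta)^{\alpha/2}\big)(1+r^\alpha)(\epsilon-x_0)}{\eta}}.$$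
   Context: System model: a source is at the origin and a destination is at distance $d>0$ from it; polar angles $\theta$ are measured from the source–destination direction. Relays are the points of a homogeneous Poisson point process of intensity $\lambda>0$ restricted to the disc $\mathcal D$ of radius $R_{\mathcal D}>0$ centred at the source, so the number $N$ of relays is Poisson with mean $\pi R_{\mathcal D}^2\lambda$ and, given $N$, the relays are i.i.d. uniform in $\mathcal D$. Path-loss exponent $\alpha>0$ (bounded model: path loss $1+\text{distance}^\alpha$). Fading coefficients $h_d$ (source–destination), $h_i$ (source–relay $i$), $g_i$ (relay $i$–destination) are mutually independent circularly symmetric complex Gaussian $\mathcal{CN}(0,1)$, independent of relay locations. $d_i$ is the source–relay-$i$ distance and $c_i$ the relay-$i$–destination distance, $c_i^2=d_i^2+d^2-2d_id\cos\theta_i$. Define $x_0=|h_d|^2/(1+d^\alpha)$, $x_i=|h_i|^2/(1+d_i^\alpha)$, $y_i=|g_i|^2/(1+c_i^\alpha)$. Transmit power $P>0$, target rate $R>0$, $\tau=2^{2R}-1$, $\epsilon=\tau/P$, energy harvesting efficiency $\eta\in(0,1]$. A relay decodes iff $x_i>\epsilon$ and then transmits with harvested power $\eta(Px_i-\tau)$, so the destination SNR after combining is $P\big(x_0+\eta y_i(x_i-\epsilon)\big)$; outage occurs when this SNR is below $\tau$. *)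

theory Defs
  imports "HOL-Probability.Probability"
begin

text \<open>Modified Bessel function of the second kind of order one, via its standard
integral representation K_1(z) = int_0^infinity exp(-z cosh t) cosh t dt  (z > 0).\<close>
definition bessel_K1 :: "real \<Rightarrow> real" where
  "bessel_K1 z = (LINT t:{0..}|lborel. exp (- z * cosh t) * cosh t)"

definition CN01 :: "complex measure" where
  "CN01 = density lborel (\<lambda>z. ennreal (exp (- (cmod z)\<^sup>2) / pi))"

text \<open>Uniform distribution on the disc of radius R centred at the source (origin);
points of the plane are represented as complex numbers, the destination lies at d on the real axis.\<close>
definition unif_disc :: "real \<Rightarrow> complex measure" where
  "unif_disc R = uniform_measure lborel (cball 0 R)"

text \<open>Joint law of (N, V, relay positions, h_d, (h_k)_k, (g_k)_k): N Poisson with mean mu,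
V uniform on [0,1) (used to pick the relay index uniformly among the N relays),
relay positions i.i.d. uniform on the disc, all fading coefficients i.i.d. CN(0,1),
everything mutually independent.\<close>
definition relay_model :: "real \<Rightarrow> real \<Rightarrow>
    (nat \<times> real \<times> (nat \<Rightarrow> complex) \<times> complex \<times> (nat \<Rightarrow> complex) \<times> (nat \<Rightarrow> complex)) measure" where
  "relay_model mu R =
     measure_pmf (poisson_pmf mu) \<Otimes>\<^sub>M
     (uniform_measure lborel {0..<1::real} \<Otimes>\<^sub>M
     ((\<Pi>\<^sub>M k\<in>(UNIV::nat set). unif_disc R) \<Otimes>\<^sub>M
     (CN01 \<Otimes>\<^sub>M
     ((\<Pi>\<^sub>M k\<in>(UNIV::nat set). CN01) \<Otimes>\<^sub>M
      (\<Pi>\<^sub>M k\<in>(UNIV::nat set). CN01)))))"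

end

theory Submission
  imports Defs
begin

text \<open>Conditioning on the number of relays, the selected relay is uniform on the disc and the
  squared fadings \<open>\<bar>h\<bar>\<^sup>2\<close> are standard exponential, so every link gain is exponential with rate
  \<open>1 + dist\<^sup>\<alpha>\<close>. The events without relay, and with both the direct link and the first hop
  failing, are then products of exponential distribution functions, averaged over the disc in
  polar coordinates. For the outage of the relayed path one integrates first over the second hop,
  which leaves \<open>1 - exp (- A / (x\<^sub>i - \<epsilon>))\<close>, and then over \<open>x\<^sub>i\<close>; the resulting integral
  \<open>\<integral>\<^sub>0\<^sup>\<infinity> exp (- u - A / u) du\<close> equals \<open>2 sqrt A K\<^sub>1 (2 sqrt A)\<close> by the substitution
  \<open>u = sqrt A e\<^sup>t\<close>.\<close>

section \<open>Substitution and polar coordinates for nonnegative integrals\<close>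

lemma nn_integral_substitution_nested_intervals:
  fixes f :: "real \<Rightarrow> ennreal" and g g' :: "real \<Rightarrow> real" and l u :: "nat \<Rightarrow> real"
  defines "S \<equiv> \<Union>n::nat. {l n..u n}"
  assumes [measurable]: "f \<in> borel_measurable borel"
    and [measurable]: "g \<in> borel_measurable borel" "g' \<in> borel_measurable borel"
    and "decseq l" "incseq u" "\<And>n. l n < u n"
    and deriv: "\<And>x. x \<in> S \<Longrightarrow> (g has_real_derivative g' x) (at x)"
    and "continuous_on S g'" and g'_nonneg: "\<And>x. x \<in> S \<Longrightarrow> 0 \<le> g' x"
  shows "(\<integral>\<^sup>+x. f x * indicator (\<Union>n::nat. {g (l n)..g (u n)}) x \<partial>lborel) =
         (\<integral>\<^sup>+x. f (g x) * g' x * indicator S x \<partial>lborel)"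
proof -
  have sub: "{l n..u n} \<subseteq> S" for n unfolding S_def by blast
  have g_mono: "g (l (Suc n)) \<le> g (l n)" "g (u n) \<le> g (u (Suc n))" for n
  proof -
    have "l (Suc n) \<le> l n" "u n \<le> u (Suc n)" "l n \<le> u n"
      using \<open>decseq l\<close> \<open>incseq u\<close> \<open>l n < u n\<close> by (auto simp: decseq_SucD incseq_SucD less_imp_le)
    moreover have "x \<in> S" if "l (Suc n) \<le> x" "x \<le> u (Suc n)" for x
      using sub[of "Suc n"] that by auto
    ultimately show "g (l (Suc n)) \<le> g (l n)" "g (u n) \<le> g (u (Suc n))"
      using deriv_nonneg_imp_mono[of "l (Suc n)" "l n" g g'] deriv_nonneg_imp_mono[of "u n" "u (Suc n)" g g']
        deriv g'_nonneg by force+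
  qed
  have step: "(\<integral>\<^sup>+x. f x * indicator {g (l n)..g (u n)} x \<partial>lborel) =
              (\<integral>\<^sup>+x. f (g x) * g' x * indicator {l n..u n} x \<partial>lborel)" for n
    using sub[of n] \<open>l n < u n\<close>
    by (intro nn_integral_substitution_aux deriv g'_nonneg continuous_on_subset[OF \<open>continuous_on S g'\<close>]) auto
  let ?D = "density lborel f" and ?D' = "density lborel (\<lambda>x. f (g x) * ennreal (g' x))"
  have "(\<integral>\<^sup>+x. f x * indicator (\<Union>n. {g (l n)..g (u n)}) x \<partial>lborel) = emeasure ?D (\<Union>n. {g (l n)..g (u n)})"
    by (simp add: emeasure_density)
  also have "\<dots> = (SUP n. emeasure ?D {g (l n)..g (u n)})"
    by (intro SUP_emeasure_incseq[symmetric] incseq_SucI subsetI) (auto intro: order_trans g_mono)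
  also have "\<dots> = (SUP n. emeasure ?D' {l n..u n})"
    using step by (simp add: emeasure_density)
  also have "\<dots> = emeasure ?D' S"
    unfolding S_def using \<open>decseq l\<close> \<open>incseq u\<close>
    by (intro SUP_emeasure_incseq) (auto simp: incseq_def decseq_def intro: order_trans)
  also have "\<dots> = (\<integral>\<^sup>+x. f (g x) * g' x * indicator S x \<partial>lborel)"
    unfolding S_def by (simp add: emeasure_density)
  finally show ?thesis .
qed


lemma nn_integral_substitution_real_line:
  fixes f :: "real \<Rightarrow> ennreal" and g g' :: "real \<Rightarrow> real"
  assumes [measurable]: "f \<in> borel_measurable borel"
    and deriv: "\<And>x. (g has_real_derivative g' x) (at x)"
    and "continuous_on UNIV g'" and "\<And>x. 0 \<le> g' x"
  shows "(\<integral>\<^sup>+x. f x * indicator (\<Union>n::nat. {g (- real (Suc n))..g (real (Suc n))}) x \<partial>lborel) =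
         (\<integral>\<^sup>+x. f (g x) * g' x \<partial>lborel)"
proof -
  have "g \<in> borel_measurable borel"
    using deriv by (intro borel_measurable_continuous_onI continuous_at_imp_continuous_on) (auto intro: DERIV_isCont)
  moreover have "g' \<in> borel_measurable borel"
    using \<open>continuous_on UNIV g'\<close> by (rule borel_measurable_continuous_onI)
  moreover have "(\<Union>n::nat. {- real (Suc n)..real (Suc n)}) = UNIV"
  proof -
    have "\<exists>n::nat. - real (Suc n) \<le> x \<and> x \<le> real (Suc n)" for x
    proof -
      obtain n :: nat where "\<bar>x\<bar> \<le> real n" using real_arch_simple by blast
      then show ?thesis by (intro exI[of _ n]) auto
    qed
    then show ?thesis by auto
  qed
  ultimately show ?thesis
    using nn_integral_substitution_nested_intervals[of f g g' "\<lambda>n. - real (Suc n)" "\<lambda>n. real (Suc n)"] assms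
    by (simp add: decseq_def incseq_def)
qed

lemma nn_integral_substitution_atLeast:
  fixes f :: "real \<Rightarrow> ennreal" and g g' :: "real \<Rightarrow> real"
  assumes [measurable]: "f \<in> borel_measurable borel" "g \<in> borel_measurable borel" "g' \<in> borel_measurable borel"
    and "\<And>x. a \<le> x \<Longrightarrow> (g has_real_derivative g' x) (at x)"
    and "continuous_on {a..} g'" and "\<And>x. a \<le> x \<Longrightarrow> 0 \<le> g' x"
  shows "(\<integral>\<^sup>+x. f x * indicator (\<Union>n::nat. {g a..g (a + real (Suc n))}) x \<partial>lborel) =
         (\<integral>\<^sup>+x. f (g x) * g' x * indicator {a..} x \<partial>lborel)"
proof -
  have "(\<Union>n::nat. {a..a + real (Suc n)}) = {a..}"
  proof -
    have "\<exists>n::nat. x \<le> a + real (Suc n)" for x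
    proof -
      obtain n :: nat where "x - a \<le> real n" using real_arch_simple by blast
      then show ?thesis by (intro exI[of _ n]) auto
    qed
    then show ?thesis by auto
  qed
  then show ?thesis
    using nn_integral_substitution_nested_intervals[of f g g' "\<lambda>_. a" "\<lambda>n. a + real (Suc n)"] assms
    by (simp add: decseq_def incseq_def)
qed

lemma UN_arctan_intervals: "(\<Union>n::nat. {arctan (- real (Suc n))..arctan (real (Suc n))}) = {-pi/2<..<pi/2}"
proof (rule set_eqI, rule iffI)
  fix x assume "x \<in> (\<Union>n::nat. {arctan (- real (Suc n))..arctan (real (Suc n))})"
  then have "\<exists>n::nat. x \<in> {arctan (- real (Suc n))..arctan (real (Suc n))}"
    by (simp only: UN_iff) (metis UNIV_I)
  then obtain n :: nat where "arctan (- real (Suc n)) \<le> x" "x \<le> arctan (real (Suc n))"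
    by (simp only: atLeastAtMost_iff) (metis)
  moreover have "- (pi/2) < arctan (- real (Suc n))" "arctan (real (Suc n)) < pi/2"
    using arctan_bounded by auto
  ultimately show "x \<in> {-pi/2<..<pi/2}" by simp
next
  fix x :: real assume x: "x \<in> {-pi/2<..<pi/2}"
  then have at: "arctan (tan x) = x" by (intro arctan_tan) auto
  obtain n :: nat where "\<bar>tan x\<bar> \<le> real n" using real_arch_simple by blast
  then have "- real (Suc n) \<le> tan x \<and> tan x \<le> real (Suc n)" by linarith
  then have "arctan (- real (Suc n)) \<le> arctan (tan x) \<and> arctan (tan x) \<le> arctan (real (Suc n))"
    by (simp only: arctan_le_iff)
  then show "x \<in> (\<Union>n::nat. {arctan (- real (Suc n))..arctan (real (Suc n))})"
    unfolding at by (simp only: UN_iff atLeastAtMost_iff) (metis UNIV_I)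
qed

lemma nn_integral_arctan_substitution:
  fixes f :: "real \<Rightarrow> ennreal"
  assumes [measurable]: "f \<in> borel_measurable borel"
  shows "(\<integral>\<^sup>+x. f x * indicator {-pi/2<..<pi/2} x \<partial>lborel) = (\<integral>\<^sup>+t. f (arctan t) * ennreal (1 / (1 + t\<^sup>2)) \<partial>lborel)"
proof -
  have "(\<integral>\<^sup>+x. f x * indicator (\<Union>n::nat. {arctan (- real (Suc n))..arctan (real (Suc n))}) x \<partial>lborel) = (\<integral>\<^sup>+t. f (arctan t) * ennreal (1 / (1 + t\<^sup>2)) \<partial>lborel)"
  proof (rule nn_integral_substitution_real_line)
    show "(arctan has_real_derivative 1 / (1 + x\<^sup>2)) (at x)" for x
      using DERIV_arctan[of x] by (simp add: divide_inverse)
    show "continuous_on UNIV (\<lambda>x::real. 1 / (1 + x\<^sup>2))"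
      by (intro continuous_intros) (metis add_pos_nonneg zero_less_one zero_le_power2 less_numeral_extra(3))
  qed auto
  then show ?thesis by (simp only: UN_arctan_intervals)
qed

text \<open>Substitute \<open>y = x t\<close>, swap the integrals, substitute \<open>x = r / sqrt (1 + t\<^sup>2)\<close> and finally
  \<open>t = tan \<theta>\<close>; the Jacobians \<open>x\<close> and \<open>1 / (1 + t\<^sup>2)\<close> combine to the polar factor \<open>r\<close>.\<close>
lemma nn_integral_polar_right_half_plane:
  fixes F :: "real \<Rightarrow> real \<Rightarrow> ennreal"
  assumes [measurable]: "(\<lambda>(x, y). F x y) \<in> borel_measurable (borel \<Otimes>\<^sub>M borel)"
  shows "(\<integral>\<^sup>+x. indicator {0<..} x * (\<integral>\<^sup>+y. F x y \<partial>lborel) \<partial>lborel) =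
         (\<integral>\<^sup>+r. indicator {0<..} r * ennreal r *
             (\<integral>\<^sup>+\<theta>. indicator {-pi/2<..<pi/2} \<theta> * F (r * cos \<theta>) (r * sin \<theta>) \<partial>lborel) \<partial>lborel)"
proof -
  define c where "c t = 1 / sqrt (1 + t\<^sup>2)" for t :: real
  have c_pos: "c t > 0" for t unfolding c_def by (simp add: add_pos_nonneg)
  have c2: "c t * c t = 1 / (1 + t\<^sup>2)" for t
    unfolding c_def by (simp add: add_pos_nonneg)
  have [measurable]: "c \<in> borel_measurable borel" unfolding c_def by measurable
  have scale: "indicator {0<..} x * (\<integral>\<^sup>+y. F x y \<partial>lborel) =
            (\<integral>\<^sup>+t. indicator {0<..} x * ennreal x * F x (x * t) \<partial>lborel)" for x
  proof (cases "x > 0")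
    case True
    have "(\<integral>\<^sup>+y. F x y \<partial>lborel) = ennreal \<bar>x\<bar> * (\<integral>\<^sup>+t. F x (0 + x * t) \<partial>lborel)"
      by (rule nn_integral_real_affine) (use True in auto)
    then show ?thesis using True by (simp add: nn_integral_cmult)
  qed simp
  have "(\<integral>\<^sup>+x. indicator {0<..} x * (\<integral>\<^sup>+y. F x y \<partial>lborel) \<partial>lborel) =
        (\<integral>\<^sup>+x. \<integral>\<^sup>+t. indicator {0<..} x * ennreal x * F x (x * t) \<partial>lborel \<partial>lborel)"
    by (simp only: scale)
  also have "\<dots> = (\<integral>\<^sup>+t. \<integral>\<^sup>+x. indicator {0<..} x * ennreal x * F x (x * t) \<partial>lborel \<partial>lborel)"
    by (rule lborel_pair.Fubini') measurable
  also have "\<dots> = (\<integral>\<^sup>+t. \<integral>\<^sup>+r. indicator {0<..} r * ennreal r * (ennreal (1 / (1 + t\<^sup>2)) * F (r * c t) (r * c t * t)) \<partial>lborel \<partial>lborel)"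
  proof (rule nn_integral_cong)
    fix t :: real
    have "(\<integral>\<^sup>+x. indicator {0<..} x * ennreal x * F x (x * t) \<partial>lborel) =
          ennreal \<bar>c t\<bar> * (\<integral>\<^sup>+r. indicator {0<..} (0 + c t * r) * ennreal (0 + c t * r) * F (0 + c t * r) ((0 + c t * r) * t) \<partial>lborel)"
      by (rule nn_integral_real_affine) (use c_pos[of t] in auto)
    also have "\<dots> = (\<integral>\<^sup>+r. indicator {0<..} r * ennreal r * (ennreal (1 / (1 + t\<^sup>2)) * F (r * c t) (r * c t * t)) \<partial>lborel)"
      using c_pos[of t]
      by (subst nn_integral_cmult[symmetric]) 
         (auto intro!: nn_integral_cong simp: c2[symmetric] ennreal_mult less_imp_le zero_less_mult_iff
               mult_ac split: split_indicator)
    finally show "(\<integral>\<^sup>+x. indicator {0<..} x * ennreal x * F x (x * t) \<partial>lborel) = \<dots>" .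
  qed
  also have "\<dots> = (\<integral>\<^sup>+r. \<integral>\<^sup>+t. indicator {0<..} r * ennreal r * (ennreal (1 / (1 + t\<^sup>2)) * F (r * c t) (r * c t * t)) \<partial>lborel \<partial>lborel)"
    by (rule lborel_pair.Fubini') measurable
  also have "\<dots> = (\<integral>\<^sup>+r. indicator {0<..} r * ennreal r *
             (\<integral>\<^sup>+\<theta>. indicator {-pi/2<..<pi/2} \<theta> * F (r * cos \<theta>) (r * sin \<theta>) \<partial>lborel) \<partial>lborel)"
  proof (rule nn_integral_cong)
    fix r :: real
    have "(\<integral>\<^sup>+\<theta>. indicator {-pi/2<..<pi/2} \<theta> * F (r * cos \<theta>) (r * sin \<theta>) \<partial>lborel)
       = (\<integral>\<^sup>+\<theta>. F (r * cos \<theta>) (r * sin \<theta>) * indicator {-pi/2<..<pi/2} \<theta> \<partial>lborel)"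
      by (simp add: mult.commute)
    also have "\<dots> = (\<integral>\<^sup>+t. F (r * cos (arctan t)) (r * sin (arctan t)) * ennreal (1 / (1 + t\<^sup>2)) \<partial>lborel)"
      by (rule nn_integral_arctan_substitution) measurable
    also have "\<dots> = (\<integral>\<^sup>+t. ennreal (1 / (1 + t\<^sup>2)) * F (r * c t) (r * c t * t) \<partial>lborel)"
      by (auto simp: cos_arctan sin_arctan c_def mult.commute intro!: nn_integral_cong)
    finally show "(\<integral>\<^sup>+t. indicator {0<..} r * ennreal r * (ennreal (1 / (1 + t\<^sup>2)) * F (r * c t) (r * c t * t)) \<partial>lborel) = indicator {0<..} r * ennreal r *
             (\<integral>\<^sup>+\<theta>. indicator {-pi/2<..<pi/2} \<theta> * F (r * cos \<theta>) (r * sin \<theta>) \<partial>lborel)"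
      by (simp add: nn_integral_cmult)
  qed
  finally show ?thesis .
qed

lemma nn_integral_shift_interval:
  fixes f :: "real \<Rightarrow> ennreal"
  assumes [measurable]: "f \<in> borel_measurable borel"
  shows "(\<integral>\<^sup>+\<theta>. indicator {a<..<b} \<theta> * f (\<theta> + s) \<partial>lborel) = (\<integral>\<^sup>+\<phi>. indicator {a+s<..<b+s} \<phi> * f \<phi> \<partial>lborel)"
proof -
  have "(\<integral>\<^sup>+\<phi>. indicator {a+s<..<b+s} \<phi> * f \<phi> \<partial>lborel) = ennreal \<bar>1\<bar> * (\<integral>\<^sup>+\<theta>. indicator {a+s<..<b+s} (s + 1 * \<theta>) * f (s + 1 * \<theta>) \<partial>lborel)"
    by (rule nn_integral_real_affine) auto
  also have "\<dots> = (\<integral>\<^sup>+\<theta>. indicator {a<..<b} \<theta> * f (\<theta> + s) \<partial>lborel)"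
    by (auto intro!: nn_integral_cong split: split_indicator simp: add.commute)
  finally show ?thesis ..
qed

lemma nn_integral_reflect:
  fixes f :: "real \<Rightarrow> ennreal"
  assumes [measurable]: "f \<in> borel_measurable borel"
  shows "(\<integral>\<^sup>+x. f x \<partial>lborel) = (\<integral>\<^sup>+x. f (- x) \<partial>lborel)"
  using nn_integral_real_affine[of f "-1" 0] by simp

lemma nn_integral_split_at_0:
  fixes f :: "real \<Rightarrow> ennreal"
  assumes [measurable]: "f \<in> borel_measurable borel"
  shows "(\<integral>\<^sup>+x. f x \<partial>lborel) = (\<integral>\<^sup>+x. indicator {0<..} x * f x \<partial>lborel) + (\<integral>\<^sup>+x. indicator {0<..} x * f (- x) \<partial>lborel)"
proof -
  have "(\<integral>\<^sup>+x. f x \<partial>lborel) = (\<integral>\<^sup>+x. indicator {0<..} x * f x + indicator {..<0} x * f x \<partial>lborel)"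
    by (rule nn_integral_cong_AE) (use AE_lborel_singleton[of 0] in \<open>auto split: split_indicator\<close>)
  also have "\<dots> = (\<integral>\<^sup>+x. indicator {0<..} x * f x \<partial>lborel) + (\<integral>\<^sup>+x. indicator {..<0} x * f x \<partial>lborel)"
    by (rule nn_integral_add) auto
  also have "(\<integral>\<^sup>+x. indicator {..<0} x * f x \<partial>lborel) = (\<integral>\<^sup>+x. indicator {..<0} (- x) * f (- x) \<partial>lborel)"
    by (rule nn_integral_reflect) auto
  also have "\<dots> = (\<integral>\<^sup>+x. indicator {0<..} x * f (- x) \<partial>lborel)"
    by (auto intro!: nn_integral_cong split: split_indicator)
  finally show ?thesis .
qed

lemma nn_integral_polar_upper_half_plane:
  fixes F :: "real \<Rightarrow> real \<Rightarrow> ennreal"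
  assumes [measurable]: "(\<lambda>(x, y). F x y) \<in> borel_measurable (borel \<Otimes>\<^sub>M borel)"
  shows "(\<integral>\<^sup>+y. indicator {0<..} y * (\<integral>\<^sup>+x. F x y \<partial>lborel) \<partial>lborel) =
         (\<integral>\<^sup>+r. indicator {0<..} r * ennreal r *
             (\<integral>\<^sup>+\<theta>. indicator {0<..<pi} \<theta> * F (r * cos \<theta>) (r * sin \<theta>) \<partial>lborel) \<partial>lborel)"
proof -
  have "(\<integral>\<^sup>+y. indicator {0<..} y * (\<integral>\<^sup>+x. F x y \<partial>lborel) \<partial>lborel) =
        (\<integral>\<^sup>+y. indicator {0<..} y * (\<integral>\<^sup>+x. F (- x) y \<partial>lborel) \<partial>lborel)"
    by (subst nn_integral_reflect) (auto intro!: nn_integral_cong)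
  also have "\<dots> = (\<integral>\<^sup>+r. indicator {0<..} r * ennreal r *
             (\<integral>\<^sup>+\<theta>. indicator {-pi/2<..<pi/2} \<theta> * F (- (r * sin \<theta>)) (r * cos \<theta>) \<partial>lborel) \<partial>lborel)"
    by (rule nn_integral_polar_right_half_plane) measurable
  also have "\<dots> = (\<integral>\<^sup>+r. indicator {0<..} r * ennreal r *
             (\<integral>\<^sup>+\<theta>. indicator {0<..<pi} \<theta> * F (r * cos \<theta>) (r * sin \<theta>) \<partial>lborel) \<partial>lborel)"
  proof (rule nn_integral_cong, rule arg_cong[where f="\<lambda>z. _ * z"])
    fix r :: real
    have "(\<integral>\<^sup>+\<theta>. indicator {-pi/2<..<pi/2} \<theta> * F (- (r * sin \<theta>)) (r * cos \<theta>) \<partial>lborel)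
        = (\<integral>\<^sup>+\<theta>. indicator {-pi/2<..<pi/2} \<theta> * F (r * cos (\<theta> + pi/2)) (r * sin (\<theta> + pi/2)) \<partial>lborel)"
      by (auto simp: cos_add sin_add intro!: nn_integral_cong)
    also have "\<dots> = (\<integral>\<^sup>+\<theta>. indicator {-pi/2+pi/2<..<pi/2+pi/2} \<theta> * F (r * cos \<theta>) (r * sin \<theta>) \<partial>lborel)"
      by (rule nn_integral_shift_interval) measurable
    finally show "(\<integral>\<^sup>+\<theta>. indicator {-pi/2<..<pi/2} \<theta> * F (- (r * sin \<theta>)) (r * cos \<theta>) \<partial>lborel) =
                  (\<integral>\<^sup>+\<theta>. indicator {0<..<pi} \<theta> * F (r * cos \<theta>) (r * sin \<theta>) \<partial>lborel)" by simp
  qed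
  finally show ?thesis .
qed

lemma nn_integral_polar_lower_half_plane:
  fixes F :: "real \<Rightarrow> real \<Rightarrow> ennreal"
  assumes [measurable]: "(\<lambda>(x, y). F x y) \<in> borel_measurable (borel \<Otimes>\<^sub>M borel)"
  shows "(\<integral>\<^sup>+y. indicator {0<..} y * (\<integral>\<^sup>+x. F x (- y) \<partial>lborel) \<partial>lborel) =
         (\<integral>\<^sup>+r. indicator {0<..} r * ennreal r *
             (\<integral>\<^sup>+\<theta>. indicator {pi<..<2*pi} \<theta> * F (r * cos \<theta>) (r * sin \<theta>) \<partial>lborel) \<partial>lborel)"
proof -
  have "(\<integral>\<^sup>+y. indicator {0<..} y * (\<integral>\<^sup>+x. F x (- y) \<partial>lborel) \<partial>lborel) =
        (\<integral>\<^sup>+y. indicator {0<..} y * (\<integral>\<^sup>+x. F (- x) (- y) \<partial>lborel) \<partial>lborel)"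
    by (subst nn_integral_reflect) (auto intro!: nn_integral_cong)
  also have "\<dots> = (\<integral>\<^sup>+r. indicator {0<..} r * ennreal r *
             (\<integral>\<^sup>+\<theta>. indicator {0<..<pi} \<theta> * F (- (r * cos \<theta>)) (- (r * sin \<theta>)) \<partial>lborel) \<partial>lborel)"
    by (rule nn_integral_polar_upper_half_plane) measurable
  also have "\<dots> = (\<integral>\<^sup>+r. indicator {0<..} r * ennreal r *
             (\<integral>\<^sup>+\<theta>. indicator {pi<..<2*pi} \<theta> * F (r * cos \<theta>) (r * sin \<theta>) \<partial>lborel) \<partial>lborel)"
  proof (rule nn_integral_cong, rule arg_cong[where f="\<lambda>z. _ * z"])
    fix r :: real
    have "(\<integral>\<^sup>+\<theta>. indicator {0<..<pi} \<theta> * F (- (r * cos \<theta>)) (- (r * sin \<theta>)) \<partial>lborel)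
        = (\<integral>\<^sup>+\<theta>. indicator {0<..<pi} \<theta> * F (r * cos (\<theta> + pi)) (r * sin (\<theta> + pi)) \<partial>lborel)"
      by (auto simp: cos_add sin_add intro!: nn_integral_cong)
    also have "\<dots> = (\<integral>\<^sup>+\<theta>. indicator {0+pi<..<pi+pi} \<theta> * F (r * cos \<theta>) (r * sin \<theta>) \<partial>lborel)"
      by (rule nn_integral_shift_interval) measurable
    finally show "(\<integral>\<^sup>+\<theta>. indicator {0<..<pi} \<theta> * F (- (r * cos \<theta>)) (- (r * sin \<theta>)) \<partial>lborel) =
                  (\<integral>\<^sup>+\<theta>. indicator {pi<..<2*pi} \<theta> * F (r * cos \<theta>) (r * sin \<theta>) \<partial>lborel)" by simp
  qed
  finally show ?thesis .
qed

lemma nn_integral_polar_plane: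
  fixes F :: "real \<Rightarrow> real \<Rightarrow> ennreal"
  assumes [measurable]: "(\<lambda>(x, y). F x y) \<in> borel_measurable (borel \<Otimes>\<^sub>M borel)"
  shows "(\<integral>\<^sup>+x. (\<integral>\<^sup>+y. F x y \<partial>lborel) \<partial>lborel) =
         (\<integral>\<^sup>+r. indicator {0<..} r * ennreal r *
             (\<integral>\<^sup>+\<theta>. indicator {0..2*pi} \<theta> * F (r * cos \<theta>) (r * sin \<theta>) \<partial>lborel) \<partial>lborel)"
proof -
  let ?K = "\<lambda>r \<theta>. F (r * cos \<theta>) (r * sin \<theta>)"
  have circle: "(\<integral>\<^sup>+\<theta>. indicator {0<..<pi} \<theta> * ?K r \<theta> \<partial>lborel) + (\<integral>\<^sup>+\<theta>. indicator {pi<..<2*pi} \<theta> * ?K r \<theta> \<partial>lborel)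
      = (\<integral>\<^sup>+\<theta>. indicator {0..2*pi} \<theta> * ?K r \<theta> \<partial>lborel)" for r
  proof -
    have "AE \<theta> in lborel. \<theta> \<noteq> 0 \<and> \<theta> \<noteq> pi \<and> \<theta> \<noteq> 2*pi"
      using AE_lborel_singleton[of 0] AE_lborel_singleton[of pi] AE_lborel_singleton[of "2*pi"] by eventually_elim auto
    then have "AE \<theta> in lborel. indicator {0<..<pi} \<theta> * ?K r \<theta> + indicator {pi<..<2*pi} \<theta> * ?K r \<theta> =
                                  indicator {0..2*pi} \<theta> * ?K r \<theta>"
      by eventually_elim (auto split: split_indicator)
    then show ?thesis by (subst nn_integral_add[symmetric]) (auto intro: nn_integral_cong_AE)
  qed
  have "(\<integral>\<^sup>+x. (\<integral>\<^sup>+y. F x y \<partial>lborel) \<partial>lborel) = (\<integral>\<^sup>+y. (\<integral>\<^sup>+x. F x y \<partial>lborel) \<partial>lborel)"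
    by (rule lborel_pair.Fubini') measurable
  also have "\<dots> = (\<integral>\<^sup>+y. indicator {0<..} y * (\<integral>\<^sup>+x. F x y \<partial>lborel) \<partial>lborel)
                 + (\<integral>\<^sup>+y. indicator {0<..} y * (\<integral>\<^sup>+x. F x (- y) \<partial>lborel) \<partial>lborel)"
    by (rule nn_integral_split_at_0) measurable
  also have "\<dots> = (\<integral>\<^sup>+r. indicator {0<..} r * ennreal r * (\<integral>\<^sup>+\<theta>. indicator {0<..<pi} \<theta> * ?K r \<theta> \<partial>lborel) +
                         indicator {0<..} r * ennreal r * (\<integral>\<^sup>+\<theta>. indicator {pi<..<2*pi} \<theta> * ?K r \<theta> \<partial>lborel) \<partial>lborel)"
    by (simp only: nn_integral_polar_upper_half_plane nn_integral_polar_lower_half_plane assms)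
       (rule nn_integral_add[symmetric]; measurable)
  also have "\<dots> = (\<integral>\<^sup>+r. indicator {0<..} r * ennreal r * (\<integral>\<^sup>+\<theta>. indicator {0..2*pi} \<theta> * ?K r \<theta> \<partial>lborel) \<partial>lborel)"
    by (simp only: circle distrib_left[symmetric])
  finally show ?thesis .
qed

lemma Complex_fun_eq: "Complex = (\<lambda>x y. complex_of_real x + complex_of_real y * \<i>)"
  by (auto simp: fun_eq_iff Complex_eq)

lemma measurable_Complex[measurable]:
  "(\<lambda>x. Complex (f x) (g x)) \<in> borel_measurable M"
  if [measurable]: "f \<in> borel_measurable M" "g \<in> borel_measurable M"
  unfolding Complex_fun_eq by measurable

lemma nn_integral_complex_iterated:
  fixes F :: "complex \<Rightarrow> ennreal"
  assumes [measurable]: "F \<in> borel_measurable borel"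
  shows "(\<integral>\<^sup>+z. F z \<partial>lborel) = (\<integral>\<^sup>+x. \<integral>\<^sup>+y. F (Complex x y) \<partial>lborel \<partial>lborel)"
proof -
  interpret P: product_sigma_finite "\<lambda>_::complex. lborel :: real measure"
    by unfold_locales
  have ne: "(1::complex) \<noteq> \<i>" by (simp add: complex_eq_iff)
  have "(\<integral>\<^sup>+z. F z \<partial>lborel) = (\<integral>\<^sup>+f. F (\<Sum>b\<in>Basis. f b *\<^sub>R b) \<partial>(\<Pi>\<^sub>M b\<in>Basis. lborel))"
    by (subst lborel_eq) (simp add: nn_integral_distr)
  also have "\<dots> = (\<integral>\<^sup>+f. F (f 1 *\<^sub>R 1 + f \<i> *\<^sub>R \<i>) \<partial>(\<Pi>\<^sub>M b\<in>insert 1 {\<i>}. lborel))"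
    using ne by (simp add: Basis_complex_def)
  also have "\<dots> = (\<integral>\<^sup>+y. \<integral>\<^sup>+x. F ((x(1:=y)) 1 *\<^sub>R 1 + (x(1:=y)) \<i> *\<^sub>R \<i>) \<partial>(\<Pi>\<^sub>M b\<in>{\<i>}. lborel) \<partial>lborel)"
    by (rule P.product_nn_integral_insert_rev) (use ne in auto)
  also have "\<dots> = (\<integral>\<^sup>+y. \<integral>\<^sup>+x. F (Complex y (x \<i>)) \<partial>(\<Pi>\<^sub>M b\<in>{\<i>}. lborel) \<partial>lborel)"
    using ne by (auto intro!: nn_integral_cong arg_cong[where f=F] simp: complex_eq_iff)
  also have "\<dots> = (\<integral>\<^sup>+y. \<integral>\<^sup>+t. F (Complex y t) \<partial>lborel \<partial>lborel)"
    by (intro nn_integral_cong P.product_nn_integral_singleton) auto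
  finally show ?thesis .
qed

lemma nn_integral_complex_polar:
  fixes F :: "complex \<Rightarrow> ennreal"
  assumes [measurable]: "F \<in> borel_measurable borel"
  shows "(\<integral>\<^sup>+z. F z \<partial>lborel) = (\<integral>\<^sup>+r. indicator {0<..} r * ennreal r *
             (\<integral>\<^sup>+\<theta>. indicator {0..2*pi} \<theta> * F (Complex (r * cos \<theta>) (r * sin \<theta>)) \<partial>lborel) \<partial>lborel)"
  by (subst nn_integral_complex_iterated) (auto intro!: nn_integral_polar_plane)


lemma norm_Complex_polar: "cmod (Complex (r * cos t) (r * sin t)) = \<bar>r\<bar>"
proof -
  have "(cmod (Complex (r * cos t) (r * sin t)))\<^sup>2 = r\<^sup>2"
    by (simp add: cmod_def power_mult_distrib flip: distrib_left)
  then show ?thesis by (metis abs_of_nonneg norm_ge_zero power2_eq_iff real_sqrt_abs real_sqrt_power)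
qed

lemma norm_Complex_polar_minus_powr:
  "cmod (Complex (r * cos t) (r * sin t) - complex_of_real d) powr alpha = (r\<^sup>2 + d\<^sup>2 - 2 * r * d * cos t) powr (alpha / 2)"
proof -
  have eq: "(r * cos t - d)\<^sup>2 + (r * sin t)\<^sup>2 = r\<^sup>2 + d\<^sup>2 - 2 * r * d * cos t"
    by (simp add: power_mult_distrib sin_squared_eq power2_diff algebra_simps)
  then have "cmod (Complex (r * cos t) (r * sin t) - complex_of_real d) = (r\<^sup>2 + d\<^sup>2 - 2 * r * d * cos t) powr (1/2)"
    by (simp add: cmod_def powr_half_sqrt flip: eq)
  then show ?thesis by (simp add: powr_powr)
qed

section \<open>The standard complex Gaussian and the uniform disc\<close>

lemma sets_CN01 [measurable_cong, simp]: "sets CN01 = sets borel"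
  unfolding CN01_def by simp

lemma space_CN01 [simp]: "space CN01 = UNIV"
  unfolding CN01_def by simp

lemma sets_unif_disc [measurable_cong, simp]: "sets (unif_disc R) = sets borel"
  unfolding unif_disc_def by simp

lemma space_unif_disc [simp]: "space (unif_disc R) = UNIV"
  unfolding unif_disc_def by simp

lemma UN_square_intervals: "(\<Union>n::nat. {(0::real)\<^sup>2..(0 + real (Suc n))\<^sup>2}) = {0..}"
proof -
  have "x \<in> (\<Union>n::nat. {(0::real)\<^sup>2..(0 + real (Suc n))\<^sup>2})" if "x \<ge> 0" for x
  proof -
    obtain n :: nat where "x \<le> real n" using real_arch_simple by blast
    moreover have "real (Suc n) \<le> (real (Suc n))\<^sup>2" by (rule self_le_power) auto
    ultimately show ?thesis using that by (intro UN_I[of n]) auto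
  qed
  then show ?thesis by auto
qed

text \<open>In polar coordinates the density \<open>exp (- \<bar>z\<bar>\<^sup>2) / pi\<close> has no angular dependence, and
  \<open>s = r\<^sup>2\<close> turns \<open>2 r exp (- r\<^sup>2) dr\<close> into \<open>exp (- s) ds\<close>: \<open>\<bar>z\<bar>\<^sup>2\<close> is standard exponential.\<close>
lemma nn_integral_CN01_norm_sq:
  fixes f :: "real \<Rightarrow> ennreal"
  assumes [measurable]: "f \<in> borel_measurable borel"
  shows "(\<integral>\<^sup>+z. f ((cmod z)\<^sup>2) \<partial>CN01) = (\<integral>\<^sup>+s. f s * ennreal (exp (- s)) * indicator {0..} s \<partial>lborel)"
proof -
  have "(\<integral>\<^sup>+z. f ((cmod z)\<^sup>2) \<partial>CN01) = (\<integral>\<^sup>+z. ennreal (exp (- (cmod z)\<^sup>2) / pi) * f ((cmod z)\<^sup>2) \<partial>lborel)"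
    unfolding CN01_def by (subst nn_integral_density) auto
  also have "\<dots> = (\<integral>\<^sup>+r. indicator {0<..} r * ennreal r *
             (\<integral>\<^sup>+\<theta>. indicator {0..2*pi} \<theta> * (ennreal (exp (- r\<^sup>2) / pi) * f (r\<^sup>2)) \<partial>lborel) \<partial>lborel)"
    by (subst nn_integral_complex_polar) (simp_all add: norm_Complex_polar)
  also have "\<dots> = (\<integral>\<^sup>+r. f (r\<^sup>2) * ennreal (exp (- r\<^sup>2)) * ennreal (2 * r) * indicator {0..} r \<partial>lborel)"
  proof (rule nn_integral_cong)
    fix r :: real
    have "ennreal r * (ennreal (exp (- r\<^sup>2) / pi) * c) * ennreal (2 * pi) = c * ennreal (exp (- r\<^sup>2)) * ennreal (2 * r)"
      if "r > 0" for c
    proof -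
      have "ennreal r * (ennreal (exp (- r\<^sup>2) / pi) * c) * ennreal (2 * pi) =
            c * (ennreal r * ennreal (exp (- r\<^sup>2) / pi) * ennreal (2 * pi))"
        by (simp only: ac_simps)
      also have "ennreal r * ennreal (exp (- r\<^sup>2) / pi) * ennreal (2 * pi) = ennreal (exp (- r\<^sup>2)) * ennreal (2 * r)"
        using that by (simp flip: ennreal_mult)
      finally show ?thesis by (simp only: ac_simps)
    qed
    moreover have "(\<integral>\<^sup>+\<theta>. indicator {0..2*pi} \<theta> * c \<partial>lborel) = c * ennreal (2 * pi)" for c
      by (subst mult.commute) (simp add: nn_integral_cmult_indicator)
    ultimately show "indicator {0<..} r * ennreal r *
             (\<integral>\<^sup>+\<theta>. indicator {0..2*pi} \<theta> * (ennreal (exp (- r\<^sup>2) / pi) * f (r\<^sup>2)) \<partial>lborel) =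
          f (r\<^sup>2) * ennreal (exp (- r\<^sup>2)) * ennreal (2 * r) * indicator {0..} r"
      by (cases "0 < r"; cases "r = 0") (simp_all add: indicator_def mult.assoc)
  qed
  also have "\<dots> = (\<integral>\<^sup>+s. f s * ennreal (exp (- s)) * indicator (\<Union>n::nat. {(0::real)\<^sup>2..(0 + real (Suc n))\<^sup>2}) s \<partial>lborel)"
    by (rule nn_integral_substitution_atLeast[symmetric, where g="\<lambda>r. r\<^sup>2" and g'="\<lambda>r. 2 * r" and f="\<lambda>s. f s * ennreal (exp (- s))"])
      (auto intro!: derivative_eq_intros continuous_intros)
  also have "\<dots> = (\<integral>\<^sup>+s. f s * ennreal (exp (- s)) * indicator {0..} s \<partial>lborel)"
    by (simp only: UN_square_intervals)
  finally show ?thesis .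
qed

lemma nn_integral_exp_neg_atLeast_0: "(\<integral>\<^sup>+s. ennreal (exp (- s)) * indicator {0..} s \<partial>lborel) = 1"
proof -
  have lim: "((\<lambda>x::real. exp (- x)) \<longlongrightarrow> 0) at_top"
    by (rule filterlim_compose[OF exp_at_bot filterlim_uminus_at_bot_at_top])
  have "(\<integral>\<^sup>+s. ennreal (exp (- s)) * indicator {0..} s \<partial>lborel) = ennreal (- 0 - (- exp (- 0)))"
    by (rule nn_integral_FTC_atLeast[where F="\<lambda>x. - exp (- x)"])
       (auto intro!: derivative_eq_intros tendsto_minus_cancel_left[THEN iffD1] simp: lim)
  then show ?thesis by simp
qed

lemma nn_integral_exp_neg_Icc:
  assumes "0 \<le> c"
  shows "(\<integral>\<^sup>+s. ennreal (exp (- s)) * indicator {0..c} s \<partial>lborel) = ennreal (1 - exp (- c))"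
proof -
  have "(\<integral>\<^sup>+s. ennreal (exp (- s)) * indicator {0..c} s \<partial>lborel) = ennreal (- exp (- c) - (- exp (- 0)))"
    by (rule nn_integral_FTC_Icc[where F="\<lambda>x. - exp (- x)"])
       (use assms in \<open>auto intro!: derivative_eq_intros\<close>)
  then show ?thesis by simp
qed

lemma prob_space_CN01: "prob_space CN01"
proof
  have "emeasure CN01 (space CN01) = (\<integral>\<^sup>+z. (\<lambda>_. 1::ennreal) ((cmod z)\<^sup>2) \<partial>CN01)"
    by simp
  also have "\<dots> = 1"
    by (subst nn_integral_CN01_norm_sq) (auto simp: nn_integral_exp_neg_atLeast_0)
  finally show "emeasure CN01 (space CN01) = 1" .
qed

lemma emeasure_lborel_cball_complex: "0 \<le> R \<Longrightarrow> emeasure lborel (cball (0::complex) R) = ennreal (pi * R\<^sup>2)"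
  by (simp add: emeasure_cball unit_ball_vol_2)

lemma prob_space_unif_disc: "0 < R \<Longrightarrow> prob_space (unif_disc R)"
  unfolding unif_disc_def by (rule prob_space_uniform_measure) (auto simp: emeasure_lborel_cball_complex)

lemma nn_integral_unif_disc_polar:
  fixes f :: "complex \<Rightarrow> ennreal"
  assumes [measurable]: "f \<in> borel_measurable borel" and R: "0 < R"
  shows "(\<integral>\<^sup>+w. f w \<partial>unif_disc R) = ennreal (1 / (pi * R\<^sup>2)) *
     (\<integral>\<^sup>+r. indicator {0<..R} r * ennreal r * (\<integral>\<^sup>+\<theta>. indicator {0..2*pi} \<theta> * f (Complex (r * cos \<theta>) (r * sin \<theta>)) \<partial>lborel) \<partial>lborel)"
proof -
  have "(\<integral>\<^sup>+w. f w \<partial>unif_disc R) = (\<integral>\<^sup>+w. f w * indicator (cball 0 R) w \<partial>lborel) / ennreal (pi * R\<^sup>2)"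
    unfolding unif_disc_def using R by (subst nn_integral_uniform_measure) (auto simp: emeasure_lborel_cball_complex)
  also have "\<dots> = ennreal (1 / (pi * R\<^sup>2)) * (\<integral>\<^sup>+w. f w * indicator (cball 0 R) w \<partial>lborel)"
    using R by (simp add: divide_ennreal_def ennreal_inverse_positive ennreal_1[symmetric] ennreal_divide_eq_top_iff inverse_ennreal mult.commute
        del: ennreal_1) (simp add: field_simps)
  also have "(\<integral>\<^sup>+w. f w * indicator (cball 0 R) w \<partial>lborel) =
     (\<integral>\<^sup>+r. indicator {0<..R} r * ennreal r * (\<integral>\<^sup>+\<theta>. indicator {0..2*pi} \<theta> * f (Complex (r * cos \<theta>) (r * sin \<theta>)) \<partial>lborel) \<partial>lborel)"
    by (subst nn_integral_complex_polar)
       (auto intro!: nn_integral_cong simp: norm_Complex_polar indicator_def mult.assoc[symmetric] simp del: mult.assoc)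
  finally show ?thesis .
qed

lemma emeasure_CN01_UNIV [simp]: "emeasure CN01 UNIV = 1"
  using prob_space.emeasure_space_1[OF prob_space_CN01] by simp

lemma emeasure_unif_disc_UNIV: "0 < R \<Longrightarrow> emeasure (unif_disc R) UNIV = 1"
  using prob_space.emeasure_space_1[OF prob_space_unif_disc] by simp

lemma nn_integral_CN01_norm_sq_less:
  assumes "0 \<le> c"
  shows "(\<integral>\<^sup>+a. of_bool ((cmod a)\<^sup>2 < c) \<partial>CN01) = ennreal (1 - exp (- c))"
proof -
  have "(\<integral>\<^sup>+a. of_bool ((cmod a)\<^sup>2 < c) \<partial>CN01) = (\<integral>\<^sup>+s. of_bool (s < c) * ennreal (exp (- s)) * indicator {0..} s \<partial>lborel)"
    by (rule nn_integral_CN01_norm_sq[where f="\<lambda>s. of_bool (s < c)"]) measurable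
  also have "\<dots> = (\<integral>\<^sup>+s. ennreal (exp (- s)) * indicator {0..c} s \<partial>lborel)"
    by (rule nn_integral_cong_AE) (use AE_lborel_singleton[of c] in \<open>auto simp: indicator_def\<close>)
  also have "\<dots> = ennreal (1 - exp (- c))" by (rule nn_integral_exp_neg_Icc[OF assms])
  finally show ?thesis .
qed

lemma nn_integral_CN01_gain_less:
  assumes "c > 0" "0 \<le> e"
  shows "(\<integral>\<^sup>+a. of_bool ((cmod a)\<^sup>2 / c < e) \<partial>CN01) = ennreal (1 - exp (- c * e))"
proof -
  have "(\<integral>\<^sup>+a. of_bool ((cmod a)\<^sup>2 / c < e) \<partial>CN01) = (\<integral>\<^sup>+a. of_bool ((cmod a)\<^sup>2 < c * e) \<partial>CN01)"
    using assms by (intro nn_integral_cong) (simp add: pos_divide_less_eq mult.commute)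
  also have "\<dots> = ennreal (1 - exp (- (c * e)))" by (rule nn_integral_CN01_norm_sq_less) (use assms in simp)
  finally show ?thesis by simp
qed

lemma nn_integral_CN01_gain:
  fixes G :: "real \<Rightarrow> ennreal"
  assumes rho: "rho > 0" and [measurable]: "G \<in> borel_measurable borel"
  shows "(\<integral>\<^sup>+a. G ((cmod a)\<^sup>2 / rho) \<partial>CN01) = (\<integral>\<^sup>+x. ennreal (rho * exp (- rho * x)) * G x * indicator {0..} x \<partial>lborel)"
proof -
  have "(\<integral>\<^sup>+a. G ((cmod a)\<^sup>2 / rho) \<partial>CN01) = (\<integral>\<^sup>+s. G (s / rho) * ennreal (exp (- s)) * indicator {0..} s \<partial>lborel)"
    by (rule nn_integral_CN01_norm_sq[where f="\<lambda>s. G (s / rho)"]) measurable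
  also have "\<dots> = ennreal \<bar>rho\<bar> * (\<integral>\<^sup>+x. G ((0 + rho * x) / rho) * ennreal (exp (- (0 + rho * x))) * indicator {0..} (0 + rho * x) \<partial>lborel)"
    by (rule nn_integral_real_affine) (use rho in auto)
  also have "\<dots> = ennreal rho * (\<integral>\<^sup>+x. G x * ennreal (exp (- rho * x)) * indicator {0..} x \<partial>lborel)"
    using rho by (auto intro!: arg_cong2[where f="(*)"] nn_integral_cong simp: indicator_def zero_le_mult_iff)
  also have "\<dots> = (\<integral>\<^sup>+x. ennreal rho * (G x * ennreal (exp (- rho * x)) * indicator {0..} x) \<partial>lborel)"
    by (rule nn_integral_cmult[symmetric]) measurable
  also have "\<dots> = (\<integral>\<^sup>+x. ennreal (rho * exp (- rho * x)) * G x * indicator {0..} x \<partial>lborel)"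
    using rho by (intro nn_integral_cong) (simp add: ennreal_mult mult_ac)
  finally show ?thesis .
qed

section \<open>The Bessel integral\<close>

lemma borel_measurable_cosh_real [measurable]: "(cosh :: real \<Rightarrow> real) \<in> borel_measurable borel"
  by (intro borel_measurable_continuous_onI continuous_intros)

lemma borel_measurable_bessel_K1 [measurable]: "bessel_K1 \<in> borel_measurable borel"
  unfolding bessel_K1_def[abs_def] set_lebesgue_integral_def by measurable

definition bessel_factor :: "real \<Rightarrow> real" where
  "bessel_factor A = 2 * sqrt A * bessel_K1 (2 * sqrt A)"

lemma borel_measurable_bessel_factor [measurable]: "bessel_factor \<in> borel_measurable borel"
  unfolding bessel_factor_def[abs_def] by measurable

lemma UN_scaled_exp_intervals:
  assumes "c > 0"
  shows "(\<Union>n::nat. {c * exp (- real (Suc n))..c * exp (real (Suc n))}) = {0<..}"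
proof (rule set_eqI, rule iffI)
  fix x assume "x \<in> (\<Union>n::nat. {c * exp (- real (Suc n))..c * exp (real (Suc n))})"
  then have "\<exists>n::nat. x \<in> {c * exp (- real (Suc n))..c * exp (real (Suc n))}"
    by (simp only: UN_iff) (metis UNIV_I)
  then obtain n :: nat where "c * exp (- real (Suc n)) \<le> x" by (auto simp only: atLeastAtMost_iff)
  moreover have "0 < c * exp (- real (Suc n))" using assms by simp
  ultimately show "x \<in> {0<..}" by simp
next
  fix x :: real assume "x \<in> {0<..}"
  then have x: "x > 0" by simp
  define t where "t = ln (x / c)"
  have xt: "x = c * exp t" unfolding t_def using x assms by simp
  obtain n :: nat where "\<bar>t\<bar> \<le> real n" using real_arch_simple by blast
  then have "- real (Suc n) \<le> t \<and> t \<le> real (Suc n)" by linarith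
  then have "c * exp (- real (Suc n)) \<le> x \<and> x \<le> c * exp (real (Suc n))"
    unfolding xt using assms by simp
  then show "x \<in> (\<Union>n::nat. {c * exp (- real (Suc n))..c * exp (real (Suc n))})"
    by (simp only: UN_iff atLeastAtMost_iff) (metis UNIV_I)
qed

text \<open>The substitution \<open>u = sqrt A * exp t\<close> turns \<open>u + A / u\<close> into \<open>2 * sqrt A * cosh t\<close>.\<close>
lemma nn_integral_exp_neg_plus_inverse_cosh:
  assumes A: "A > 0"
  shows "(\<integral>\<^sup>+u. ennreal (exp (- u - A / u)) * indicator {0<..} u \<partial>lborel) =
         ennreal (2 * sqrt A) * (\<integral>\<^sup>+t. ennreal (exp (- (2 * sqrt A) * cosh t) * cosh t) * indicator {0..} t \<partial>lborel)"
proof -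
  define c where "c = sqrt A"
  have c: "c > 0" "c * c = A" using A by (auto simp: c_def)
  let ?h = "\<lambda>t. ennreal (exp (- (2 * c) * cosh t)) * ennreal (c * exp t)"
  have "(\<integral>\<^sup>+u. ennreal (exp (- u - A / u)) * indicator {0<..} u \<partial>lborel) =
        (\<integral>\<^sup>+u. ennreal (exp (- u - A / u)) * indicator (\<Union>n::nat. {c * exp (- real (Suc n))..c * exp (real (Suc n))}) u \<partial>lborel)"
    by (simp only: UN_scaled_exp_intervals[OF c(1)])
  also have "\<dots> = (\<integral>\<^sup>+t. ennreal (exp (- (c * exp t) - A / (c * exp t))) * ennreal (c * exp t) \<partial>lborel)"
    by (rule nn_integral_substitution_real_line[where g="\<lambda>t. c * exp t" and g'="\<lambda>t. c * exp t"])
       (use c in \<open>auto intro!: derivative_eq_intros continuous_intros\<close>)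
  also have "\<dots> = (\<integral>\<^sup>+t. ?h t \<partial>lborel)"
  proof (rule nn_integral_cong)
    fix t :: real
    have "- (c * exp t) - A / (c * exp t) = - (2 * c) * cosh t"
      using c by (simp add: cosh_def exp_minus field_simps)
    then show "ennreal (exp (- (c * exp t) - A / (c * exp t))) * ennreal (c * exp t) = ?h t" by simp
  qed
  also have "\<dots> = (\<integral>\<^sup>+t. indicator {0<..} t * ?h t \<partial>lborel) + (\<integral>\<^sup>+t. indicator {0<..} t * ?h (- t) \<partial>lborel)"
    by (rule nn_integral_split_at_0) measurable
  also have "\<dots> = (\<integral>\<^sup>+t. indicator {0<..} t * ?h t + indicator {0<..} t * ?h (- t) \<partial>lborel)"
    by (rule nn_integral_add[symmetric]) measurable
  also have "\<dots> = (\<integral>\<^sup>+t. ennreal (2 * c) * (ennreal (exp (- (2 * c) * cosh t) * cosh t) * indicator {0..} t) \<partial>lborel)"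
  proof (rule nn_integral_cong_AE)
    have "AE t in lborel. t \<noteq> 0" by (rule AE_lborel_singleton)
    then show "AE t in lborel. indicator {0<..} t * ?h t + indicator {0<..} t * ?h (- t) =
       ennreal (2 * c) * (ennreal (exp (- (2 * c) * cosh t) * cosh t) * indicator {0..} t)"
    proof eventually_elim
      fix t :: real assume "t \<noteq> 0"
      have ch: "c * exp t + c * exp (- t) = (2 * c) * cosh t" by (simp add: cosh_def field_simps)
      have "?h t + ?h (- t) = ennreal (exp (- (2 * c) * cosh t)) * (ennreal (c * exp t) + ennreal (c * exp (- t)))"
        by (simp add: distrib_left)
      also have "ennreal (c * exp t) + ennreal (c * exp (- t)) = ennreal ((2 * c) * cosh t)"
        using c ch by (simp flip: ennreal_plus)
      also have "ennreal (exp (- (2 * c) * cosh t)) * ennreal ((2 * c) * cosh t) =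
                 ennreal (2 * c) * ennreal (exp (- (2 * c) * cosh t) * cosh t)"
        using c by (simp add: ennreal_mult'[symmetric] ennreal_mult[symmetric] mult_ac)
      finally show "indicator {0<..} t * ?h t + indicator {0<..} t * ?h (- t) =
       ennreal (2 * c) * (ennreal (exp (- (2 * c) * cosh t) * cosh t) * indicator {0..} t)"
        using \<open>t \<noteq> 0\<close> by (auto simp: indicator_def)
    qed
  qed
  also have "\<dots> = ennreal (2 * c) * (\<integral>\<^sup>+t. ennreal (exp (- (2 * c) * cosh t) * cosh t) * indicator {0..} t \<partial>lborel)"
    by (rule nn_integral_cmult) measurable
  finally show ?thesis unfolding c_def .
qed


lemma nn_integral_exp_neg_greaterThan_0: "(\<integral>\<^sup>+u. ennreal (exp (- u)) * indicator {0<..} u \<partial>lborel) = 1"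
proof -
  have "(\<integral>\<^sup>+u. ennreal (exp (- u)) * indicator {0<..} u \<partial>lborel) = (\<integral>\<^sup>+u. ennreal (exp (- u)) * indicator {0..} u \<partial>lborel)"
    by (rule nn_integral_cong_AE) (use AE_lborel_singleton[of 0] in \<open>auto split: split_indicator\<close>)
  then show ?thesis using nn_integral_exp_neg_atLeast_0 by simp
qed

lemma nn_integral_exp_neg_plus_inverse:
  assumes A: "0 < A"
  shows "(\<integral>\<^sup>+u. ennreal (exp (- u - A / u)) * indicator {0<..} u \<partial>lborel) = ennreal (bessel_factor A)"
    and "bessel_factor A \<le> 1"
proof -
  define z where "z = 2 * sqrt A"
  have z: "z > 0" using A by (simp add: z_def)
  define X where "X = (\<integral>\<^sup>+t. ennreal (exp (- z * cosh t) * cosh t) * indicator {0..} t \<partial>lborel)"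
  define B where "B = (\<integral>\<^sup>+u. ennreal (exp (- u - A / u)) * indicator {0<..} u \<partial>lborel)"
  have BX: "B = ennreal z * X"
    unfolding B_def X_def z_def using nn_integral_exp_neg_plus_inverse_cosh[OF A] by simp
  have "B \<le> (\<integral>\<^sup>+u. ennreal (exp (- u)) * indicator {0<..} u \<partial>lborel)"
    unfolding B_def using A by (intro nn_integral_mono) (auto split: split_indicator intro!: ennreal_leI)
  then have B_le: "B \<le> 1" by (simp add: nn_integral_exp_neg_greaterThan_0)
  then have "X \<noteq> \<infinity>"
    using BX z by (auto simp: ennreal_mult_top top_unique)
  moreover have "bessel_K1 z = enn2real X"
    unfolding bessel_K1_def set_lebesgue_integral_def X_def
    by (subst integral_eq_nn_integral)
       (auto intro!: arg_cong[where f=enn2real] nn_integral_cong simp: indicator_def)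
  ultimately have "B = ennreal (bessel_factor A)"
    using z by (simp add: BX bessel_factor_def z_def[symmetric] ennreal_mult ennreal_enn2real_if)
  then show "(\<integral>\<^sup>+u. ennreal (exp (- u - A / u)) * indicator {0<..} u \<partial>lborel) = ennreal (bessel_factor A)"
    and "bessel_factor A \<le> 1"
    using B_le by (simp_all add: B_def ennreal_le_1)
qed

lemma bessel_factor_nonneg: "0 \<le> A \<Longrightarrow> 0 \<le> bessel_factor A"
  unfolding bessel_factor_def bessel_K1_def set_lebesgue_integral_def
  by (auto intro!: mult_nonneg_nonneg integral_nonneg_AE simp: indicator_def)

lemma bessel_factor_le_1: "0 \<le> A \<Longrightarrow> bessel_factor A \<le> 1"
  using nn_integral_exp_neg_plus_inverse(2)[of A] by (cases "A = 0") (auto simp: bessel_factor_def)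

lemma nn_integral_exp_neg_times_one_minus:
  assumes A: "0 < A"
  shows "(\<integral>\<^sup>+u. ennreal (exp (- u) * (1 - exp (- (A / u)))) * indicator {0<..} u \<partial>lborel) =
         ennreal (1 - bessel_factor A)"
proof -
  have "(\<integral>\<^sup>+u. ennreal (exp (- u) * (1 - exp (- (A / u)))) * indicator {0<..} u \<partial>lborel) =
        (\<integral>\<^sup>+u. ennreal (exp (- u)) * indicator {0<..} u - ennreal (exp (- u - A / u)) * indicator {0<..} u \<partial>lborel)"
  proof (rule nn_integral_cong)
    fix u :: real
    have "exp (- u) * (1 - exp (- (A / u))) = exp (- u) - exp (- u - A / u)"
      by (simp add: algebra_simps exp_diff exp_minus divide_inverse)
    then show "ennreal (exp (- u) * (1 - exp (- (A / u)))) * indicator {0<..} u =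
        ennreal (exp (- u)) * indicator {0<..} u - ennreal (exp (- u - A / u)) * indicator {0<..} u"
      by (auto simp: indicator_def ennreal_minus)
  qed
  also have "\<dots> = 1 - ennreal (bessel_factor A)"
    unfolding nn_integral_exp_neg_plus_inverse(1)[OF A, symmetric] nn_integral_exp_neg_greaterThan_0[symmetric]
    by (rule nn_integral_diff)
       (use A nn_integral_exp_neg_plus_inverse[OF A] in \<open>auto split: split_indicator intro!: ennreal_leI\<close>)
  also have "\<dots> = ennreal (1 - bessel_factor A)"
    using A by (simp add: ennreal_minus bessel_factor_nonneg flip: ennreal_1)
  finally show ?thesis .
qed

section \<open>The relay outage kernel\<close>

lemma nn_integral_relay_outage_over_g:
  assumes eta: "0 < eta" and C: "0 < C"
  shows "(\<integral>\<^sup>+g. of_bool (x0 + eta * ((cmod g)\<^sup>2 / C) * (x - eps) < eps \<and> x > eps) \<partial>CN01) =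
         of_bool (x > eps \<and> x0 < eps) * ennreal (1 - exp (- (C * (eps - x0) / (eta * (x - eps)))))"
proof (cases "x > eps")
  case False
  then show ?thesis by simp
next
  case xe: True
  show ?thesis
  proof (cases "x0 < eps")
    case False
    have "\<not> (x0 + eta * ((cmod g)\<^sup>2 / C) * (x - eps) < eps)" for g
    proof -
      have "0 \<le> eta * ((cmod g)\<^sup>2 / C) * (x - eps)" using eta C xe by simp
      then show ?thesis using False by linarith
    qed
    then show ?thesis using False by simp
  next
    case x0: True
    have iff: "(x0 + eta * (s / C) * (x - eps) < eps) \<longleftrightarrow> s < C * (eps - x0) / (eta * (x - eps))" for s
    proof -
      have "(x0 + eta * (s / C) * (x - eps) < eps) \<longleftrightarrow> s * (eta * (x - eps)) < C * (eps - x0)"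
        using eta C xe by (simp add: field_simps)
      also have "\<dots> \<longleftrightarrow> s < C * (eps - x0) / (eta * (x - eps))"
        using eta xe by (simp add: pos_less_divide_eq)
      finally show ?thesis .
    qed
    have "(\<integral>\<^sup>+g. of_bool (x0 + eta * ((cmod g)\<^sup>2 / C) * (x - eps) < eps \<and> x > eps) \<partial>CN01) =
          (\<integral>\<^sup>+g. of_bool ((cmod g)\<^sup>2 < C * (eps - x0) / (eta * (x - eps))) \<partial>CN01)"
      using xe by (intro nn_integral_cong) (simp only: iff simp_thms)
    also have "\<dots> = ennreal (1 - exp (- (C * (eps - x0) / (eta * (x - eps)))))"
      by (rule nn_integral_CN01_norm_sq_less) (use eta C xe x0 in simp)
    finally show ?thesis using xe x0 by simp
  qed
qed

lemma nn_integral_relay_outage_over_h: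
  assumes eta: "0 < eta" and C: "0 < C" and B: "0 < B" and e: "0 < eps" and x0: "x0 < eps"
  shows "(\<integral>\<^sup>+h. of_bool ((cmod h)\<^sup>2 / B > eps \<and> x0 < eps) * ennreal (1 - exp (- (C * (eps - x0) / (eta * ((cmod h)\<^sup>2 / B - eps))))) \<partial>CN01)
       = ennreal (exp (- B * eps) * (1 - bessel_factor (C * B * (eps - x0) / eta)))"
proof -
  define A where "A = C * B * (eps - x0) / eta"
  have A: "A > 0" unfolding A_def using eta C B x0 by simp
  have "(\<integral>\<^sup>+h. of_bool ((cmod h)\<^sup>2 / B > eps \<and> x0 < eps) * ennreal (1 - exp (- (C * (eps - x0) / (eta * ((cmod h)\<^sup>2 / B - eps))))) \<partial>CN01)
     = (\<integral>\<^sup>+s. of_bool (s / B > eps \<and> x0 < eps) * ennreal (1 - exp (- (C * (eps - x0) / (eta * (s / B - eps))))) * ennreal (exp (- s)) * indicator {0..} s \<partial>lborel)"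
    by (rule nn_integral_CN01_norm_sq[where f="\<lambda>s. of_bool (s / B > eps \<and> x0 < eps) * ennreal (1 - exp (- (C * (eps - x0) / (eta * (s / B - eps)))))"]) measurable
  also have "\<dots> = (\<integral>\<^sup>+s. indicator {B * eps<..} s * ennreal (exp (- s) * (1 - exp (- (A / (s - B * eps))))) \<partial>lborel)"
  proof (rule nn_integral_cong)
    fix s :: real
    show "of_bool (s / B > eps \<and> x0 < eps) * ennreal (1 - exp (- (C * (eps - x0) / (eta * (s / B - eps))))) * ennreal (exp (- s)) * indicator {0..} s
        = indicator {B * eps<..} s * ennreal (exp (- s) * (1 - exp (- (A / (s - B * eps)))))"
    proof (cases "s > B * eps")
      case True
      then have s0: "s \<ge> 0" using B e by (smt (verit) mult_pos_pos)
      have sb: "s / B > eps" using True B by (simp add: pos_less_divide_eq mult.commute)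
      have q: "C * (eps - x0) / (eta * (s / B - eps)) = A / (s - B * eps)"
        unfolding A_def using B eta True by (simp add: field_simps)
      have nn: "0 \<le> 1 - exp (- (A / (s - B * eps)))" using A True by simp
      show ?thesis using True s0 sb x0 nn by (simp add: q ennreal_mult mult.commute)
    next
      case False
      then have "\<not> s / B > eps" using B by (simp add: pos_less_divide_eq mult.commute)
      then show ?thesis using False by simp
    qed
  qed
  also have "\<dots> = (\<integral>\<^sup>+u. indicator {B * eps<..} (B * eps + u) * ennreal (exp (- (B * eps + u)) * (1 - exp (- (A / ((B * eps + u) - B * eps))))) \<partial>lborel)"
    using nn_integral_real_affine[where t="B * eps" and c=1 and f="\<lambda>s. indicator {B * eps<..} s * ennreal (exp (- s) * (1 - exp (- (A / (s - B * eps)))))"]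
    by simp
  also have "\<dots> = (\<integral>\<^sup>+u. ennreal (exp (- B * eps)) * (ennreal (exp (- u) * (1 - exp (- (A / u)))) * indicator {0<..} u) \<partial>lborel)"
  proof (rule nn_integral_cong)
    fix u :: real
    have "exp (- (B * eps + u)) = exp (- B * eps) * exp (- u)" by (simp add: exp_add[symmetric])
    moreover have "0 \<le> 1 - exp (- (A / u))" if "u > 0" using A that by simp
    ultimately show "indicator {B * eps<..} (B * eps + u) * ennreal (exp (- (B * eps + u)) * (1 - exp (- (A / ((B * eps + u) - B * eps))))) =
          ennreal (exp (- B * eps)) * (ennreal (exp (- u) * (1 - exp (- (A / u)))) * indicator {0<..} u)"
      by (auto simp: indicator_def ennreal_mult mult_ac)
  qed
  also have "\<dots> = ennreal (exp (- B * eps)) * (\<integral>\<^sup>+u. ennreal (exp (- u) * (1 - exp (- (A / u)))) * indicator {0<..} u \<partial>lborel)"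
    by (rule nn_integral_cmult) measurable
  also have "\<dots> = ennreal (exp (- B * eps)) * ennreal (1 - bessel_factor A)"
    using nn_integral_exp_neg_times_one_minus[OF A] by simp
  also have "\<dots> = ennreal (exp (- B * eps) * (1 - bessel_factor A))"
    using bessel_factor_le_1[of A] A by (simp add: ennreal_mult)
  finally show ?thesis unfolding A_def .
qed

lemma nn_integral_relay_outage:
  assumes eta: "0 < eta" and C: "0 < C" and B: "0 < B" and e: "0 < eps"
  shows "(\<integral>\<^sup>+h. \<integral>\<^sup>+g. of_bool (x0 + eta * ((cmod g)\<^sup>2 / C) * ((cmod h)\<^sup>2 / B - eps) < eps \<and> (cmod h)\<^sup>2 / B > eps) \<partial>CN01 \<partial>CN01)
     = of_bool (x0 < eps) * ennreal (exp (- B * eps) * (1 - bessel_factor (C * B * (eps - x0) / eta)))"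
proof -
  have "(\<integral>\<^sup>+h. \<integral>\<^sup>+g. of_bool (x0 + eta * ((cmod g)\<^sup>2 / C) * ((cmod h)\<^sup>2 / B - eps) < eps \<and> (cmod h)\<^sup>2 / B > eps) \<partial>CN01 \<partial>CN01)
     = (\<integral>\<^sup>+h. of_bool ((cmod h)\<^sup>2 / B > eps \<and> x0 < eps) * ennreal (1 - exp (- (C * (eps - x0) / (eta * ((cmod h)\<^sup>2 / B - eps))))) \<partial>CN01)"
    by (intro nn_integral_cong nn_integral_relay_outage_over_g eta C)
  also have "\<dots> = of_bool (x0 < eps) * ennreal (exp (- B * eps) * (1 - bessel_factor (C * B * (eps - x0) / eta)))"
  proof (cases "x0 < eps")
    case True
    then show ?thesis using nn_integral_relay_outage_over_h[OF eta C B e True] by simp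
  next
    case False
    then show ?thesis by simp
  qed
  finally show ?thesis .
qed

section \<open>Interval integrals of bounded nonnegative functions\<close>

lemma interval_integral_0_Icc: "0 \<le> b \<Longrightarrow> (LBINT x=0..ereal b. f x) = (LBINT x:{0..b}. f x)"
  using interval_integral_Icc[of 0 b f] by (simp add: zero_ereal_def)

lemma interval_integral_0_nonneg:
  fixes f :: "real \<Rightarrow> real"
  assumes "0 \<le> b" "\<And>x. x \<in> {0..b} \<Longrightarrow> 0 \<le> f x"
  shows "0 \<le> (LBINT x=0..ereal b. f x)"
  unfolding interval_integral_0_Icc[OF assms(1)] set_lebesgue_integral_def
  by (rule integral_nonneg_AE) (use assms(2) in \<open>auto simp: indicator_def\<close>)

lemma ennreal_interval_integral_0:
  fixes f :: "real \<Rightarrow> real"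
  assumes b: "0 \<le> b" and [measurable]: "f \<in> borel_measurable borel"
    and nn: "\<And>x. x \<in> {0..b} \<Longrightarrow> 0 \<le> f x" and bd: "\<And>x. x \<in> {0..b} \<Longrightarrow> f x \<le> M"
  shows "ennreal (LBINT x=0..ereal b. f x) = (\<integral>\<^sup>+x. ennreal (f x) * indicator {0..b} x \<partial>lborel)"
proof -
  have eq: "(\<integral>\<^sup>+x. ennreal (indicator {0..b} x * f x) \<partial>lborel) = (\<integral>\<^sup>+x. ennreal (f x) * indicator {0..b} x \<partial>lborel)"
    by (auto intro!: nn_integral_cong simp: indicator_def)
  have fin: "(\<integral>\<^sup>+x. ennreal (f x) * indicator {0..b} x \<partial>lborel) \<noteq> \<top>"
  proof -
    have "(\<integral>\<^sup>+x. ennreal (f x) * indicator {0..b} x \<partial>lborel) \<le> (\<integral>\<^sup>+x. ennreal M * indicator {0..b} x \<partial>lborel)"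
      by (intro nn_integral_mono) (auto simp: indicator_def intro!: ennreal_leI bd)
    also have "\<dots> = ennreal M * ennreal b" using b by (simp add: nn_integral_cmult_indicator)
    also have "\<dots> < \<top>" by (simp add: ennreal_mult_less_top)
    finally show ?thesis by simp
  qed
  have "(LBINT x=0..ereal b. f x) = enn2real (\<integral>\<^sup>+x. ennreal (indicator {0..b} x *\<^sub>R f x) \<partial>lborel)"
    unfolding interval_integral_0_Icc[OF b] set_lebesgue_integral_def
    by (rule integral_eq_nn_integral) (auto simp: indicator_def nn)
  also have "\<dots> = enn2real (\<integral>\<^sup>+x. ennreal (f x) * indicator {0..b} x \<partial>lborel)"
    using eq by simp
  finally show ?thesis using fin by (simp add: ennreal_enn2real_if)
qed

lemma interval_integral_0_le:
  fixes f :: "real \<Rightarrow> real"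
  assumes b: "0 \<le> b" and [measurable]: "f \<in> borel_measurable borel"
    and nn: "\<And>x. x \<in> {0..b} \<Longrightarrow> 0 \<le> f x" and bd: "\<And>x. x \<in> {0..b} \<Longrightarrow> f x \<le> M"
  shows "(LBINT x=0..ereal b. f x) \<le> M * b"
proof -
  have M: "0 \<le> M" if "b > 0" using nn[of 0] bd[of 0] that by auto
  have "ennreal (LBINT x=0..ereal b. f x) = (\<integral>\<^sup>+x. ennreal (f x) * indicator {0..b} x \<partial>lborel)"
    by (rule ennreal_interval_integral_0[OF b _ nn bd]) auto
  also have "\<dots> \<le> (\<integral>\<^sup>+x. ennreal M * indicator {0..b} x \<partial>lborel)"
    by (intro nn_integral_mono) (auto simp: indicator_def intro!: ennreal_leI bd)
  also have "\<dots> = ennreal M * ennreal b" using b by (simp add: nn_integral_cmult_indicator)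
  finally have "ennreal (LBINT x=0..ereal b. f x) \<le> ennreal (M * b)"
    using b by (cases "b > 0") (auto simp: ennreal_mult M)
  then show ?thesis
    using interval_integral_0_nonneg[OF b nn] b by (cases "b > 0") (auto simp: M ennreal_le_iff)
qed

lemma ennreal_interval_integral_polar_rectangle:
  fixes K :: "real \<Rightarrow> real \<Rightarrow> real"
  assumes [measurable]: "(\<lambda>(r, t). K r t) \<in> borel_measurable (borel \<Otimes>\<^sub>M borel)"
    and R: "0 \<le> R" and K01: "\<And>r t. 0 \<le> K r t \<and> K r t \<le> 1"
  shows "ennreal (LBINT r=0..ereal R. (LBINT t=0..ereal (2*pi). K r t * r)) =
           (\<integral>\<^sup>+r. (\<integral>\<^sup>+t. indicator {0..R} r * indicator {0..2*pi} t * ennreal (K r t * r) \<partial>lborel) \<partial>lborel)"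
    and "0 \<le> (LBINT r=0..ereal R. (LBINT t=0..ereal (2*pi). K r t * r))"
    and "(LBINT r=0..ereal R. (LBINT t=0..ereal (2*pi). K r t * r)) \<le> R * (2 * pi) * R"
proof -
  define I where "I r = (LBINT t=0..ereal (2*pi). K r t * r)" for r
  have I_measurable [measurable]: "I \<in> borel_measurable borel"
    unfolding I_def by (simp add: interval_integral_0_Icc set_lebesgue_integral_def) measurable
  have integrand: "0 \<le> K r t * r \<and> K r t * r \<le> R" if "r \<in> {0..R}" for r t
    using K01[of r t] that mult_right_mono[of "K r t" 1 r] by auto
  have I: "ennreal (I r) = (\<integral>\<^sup>+t. ennreal (K r t * r) * indicator {0..2*pi} t \<partial>lborel)"
    "0 \<le> I r \<and> I r \<le> R * (2 * pi)" if "r \<in> {0..R}" for r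
  proof -
    have nonneg: "0 \<le> K r t * r" and bounded: "K r t * r \<le> R" for t
      using integrand[OF that] by auto
    show "ennreal (I r) = (\<integral>\<^sup>+t. ennreal (K r t * r) * indicator {0..2*pi} t \<partial>lborel)"
      unfolding I_def by (rule ennreal_interval_integral_0[of "2*pi" _ R]) (use nonneg bounded in auto)
    have "0 \<le> (LBINT t=0..ereal (2*pi). K r t * r)"
      by (rule interval_integral_0_nonneg) (use nonneg in auto)
    moreover have "(LBINT t=0..ereal (2*pi). K r t * r) \<le> R * (2 * pi)"
      by (rule interval_integral_0_le) (use nonneg bounded in auto)
    ultimately show "0 \<le> I r \<and> I r \<le> R * (2 * pi)"
      unfolding I_def by blast
  qed
  have "ennreal (LBINT r=0..ereal R. I r) = (\<integral>\<^sup>+r. ennreal (I r) * indicator {0..R} r \<partial>lborel)"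
    using R I(2) by (intro ennreal_interval_integral_0) auto
  also have "\<dots> = (\<integral>\<^sup>+r. (\<integral>\<^sup>+t. indicator {0..R} r * indicator {0..2*pi} t * ennreal (K r t * r) \<partial>lborel) \<partial>lborel)"
  proof (rule nn_integral_cong)
    fix r :: real
    show "ennreal (I r) * indicator {0..R} r =
          (\<integral>\<^sup>+t. indicator {0..R} r * indicator {0..2*pi} t * ennreal (K r t * r) \<partial>lborel)"
      by (cases "r \<in> {0..R}") (simp_all add: I(1) mult.commute)
  qed
  finally show "ennreal (LBINT r=0..ereal R. (LBINT t=0..ereal (2*pi). K r t * r)) =
           (\<integral>\<^sup>+r. (\<integral>\<^sup>+t. indicator {0..R} r * indicator {0..2*pi} t * ennreal (K r t * r) \<partial>lborel) \<partial>lborel)"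
    unfolding I_def .
  show "0 \<le> (LBINT r=0..ereal R. (LBINT t=0..ereal (2*pi). K r t * r))"
    and "(LBINT r=0..ereal R. (LBINT t=0..ereal (2*pi). K r t * r)) \<le> R * (2 * pi) * R"
    using interval_integral_0_nonneg[OF R, of I] interval_integral_0_le[OF R I_measurable, of "R * (2 * pi)"] I(2)
    unfolding I_def by auto
qed

lemma ennreal_iterated_interval_integral:
  fixes J :: "real \<times> real \<times> real \<Rightarrow> real" and f0 :: "real \<Rightarrow> real"
  assumes [measurable]: "J \<in> borel_measurable borel" "f0 \<in> borel_measurable borel"
    and e: "0 \<le> e" and R: "0 \<le> R"
    and J01: "\<And>x r t. x \<in> {0..e} \<Longrightarrow> 0 \<le> J (x, r, t) \<and> J (x, r, t) \<le> 1"
    and f0: "\<And>x. x \<in> {0..e} \<Longrightarrow> 0 \<le> f0 x \<and> f0 x \<le> F"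
  shows "ennreal (LBINT x=0..ereal e. (LBINT r=0..ereal R. (LBINT t=0..ereal (2*pi). J (x, r, t) * r)) * f0 x) =
    (\<integral>\<^sup>+x. (\<integral>\<^sup>+r. (\<integral>\<^sup>+t. ennreal (f0 x) * indicator {0..e} x * indicator {0..R} r * indicator {0..2*pi} t *
        ennreal (J (x, r, t) * r) \<partial>lborel) \<partial>lborel) \<partial>lborel)"
proof -
  define I where "I x = (LBINT r=0..ereal R. (LBINT t=0..ereal (2*pi). J (x, r, t) * r))" for x
  have [measurable]: "I \<in> borel_measurable borel"
    unfolding I_def by (simp add: interval_integral_0_Icc R set_lebesgue_integral_def) measurable
  note fiber = ennreal_interval_integral_polar_rectangle[where K="\<lambda>r t. J (x, r, t)" for x, OF _ R J01]
  have I_bounds: "0 \<le> I x \<and> I x \<le> R * (2 * pi) * R" if "x \<in> {0..e}" for x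
    unfolding I_def using fiber(2,3) that by auto
  have "ennreal (LBINT x=0..ereal e. I x * f0 x) = (\<integral>\<^sup>+x. ennreal (I x * f0 x) * indicator {0..e} x \<partial>lborel)"
    using I_bounds f0 R by (intro ennreal_interval_integral_0[OF e, of _ "R * (2 * pi) * R * F"]) (auto intro!: mult_mono)
  also have "\<dots> = (\<integral>\<^sup>+x. (\<integral>\<^sup>+r. (\<integral>\<^sup>+t. ennreal (f0 x) * indicator {0..e} x * indicator {0..R} r * indicator {0..2*pi} t *
        ennreal (J (x, r, t) * r) \<partial>lborel) \<partial>lborel) \<partial>lborel)"
  proof (rule nn_integral_cong)
    fix x :: real
    show "ennreal (I x * f0 x) * indicator {0..e} x = (\<integral>\<^sup>+r. (\<integral>\<^sup>+t. ennreal (f0 x) * indicator {0..e} x * indicator {0..R} r *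
            indicator {0..2*pi} t * ennreal (J (x, r, t) * r) \<partial>lborel) \<partial>lborel)"
    proof (cases "x \<in> {0..e}")
      case True
      then have "ennreal (I x * f0 x) * indicator {0..e} x = ennreal (f0 x) * ennreal (I x)"
        using I_bounds[of x] f0[of x] by (simp add: ennreal_mult mult.commute)
      also have "\<dots> = ennreal (f0 x) * (\<integral>\<^sup>+r. (\<integral>\<^sup>+t. indicator {0..R} r * indicator {0..2*pi} t * ennreal (J (x, r, t) * r) \<partial>lborel) \<partial>lborel)"
        unfolding I_def by (subst fiber(1)) (use True in auto)
      also have "\<dots> = (\<integral>\<^sup>+r. (\<integral>\<^sup>+t. ennreal (f0 x) * indicator {0..e} x * indicator {0..R} r * indicator {0..2*pi} t *
            ennreal (J (x, r, t) * r) \<partial>lborel) \<partial>lborel)"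
        using True by (simp add: nn_integral_cmult[symmetric] mult.assoc)
      finally show ?thesis .
    qed simp
  qed
  finally show ?thesis unfolding I_def .
qed

lemma ennreal_iterated_interval_integral_polar:
  fixes J :: "real \<times> real \<times> real \<Rightarrow> real" and f0 :: "real \<Rightarrow> real"
  assumes [measurable]: "J \<in> borel_measurable borel" "f0 \<in> borel_measurable borel"
    and "0 \<le> e" "0 \<le> R"
    and J01: "\<And>x r t. x \<in> {0..e} \<Longrightarrow> 0 \<le> J (x, r, t) \<and> J (x, r, t) \<le> 1"
    and "\<And>x. x \<in> {0..e} \<Longrightarrow> 0 \<le> f0 x \<and> f0 x \<le> F"
  shows "ennreal (LBINT x=0..ereal e. (LBINT r=0..ereal R. (LBINT t=0..ereal (2*pi). J (x, r, t) * r)) * f0 x) =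
    (\<integral>\<^sup>+r. indicator {0<..R} r * ennreal r * (\<integral>\<^sup>+t. indicator {0..2*pi} t *
        (\<integral>\<^sup>+x. ennreal (f0 x) * (of_bool (x < e) * ennreal (J (x, r, t))) * indicator {0..} x \<partial>lborel) \<partial>lborel) \<partial>lborel)"
proof -
  let ?F = "\<lambda>x r t. ennreal (f0 x) * indicator {0..e} x * indicator {0..R} r * indicator {0..2*pi} t * ennreal (J (x, r, t) * r)"
  have "ennreal (LBINT x=0..ereal e. (LBINT r=0..ereal R. (LBINT t=0..ereal (2*pi). J (x, r, t) * r)) * f0 x) =
        (\<integral>\<^sup>+x. (\<integral>\<^sup>+r. (\<integral>\<^sup>+t. ?F x r t \<partial>lborel) \<partial>lborel) \<partial>lborel)"
    by (rule ennreal_iterated_interval_integral) (use assms in auto)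
  also have "\<dots> = (\<integral>\<^sup>+r. (\<integral>\<^sup>+x. (\<integral>\<^sup>+t. ?F x r t \<partial>lborel) \<partial>lborel) \<partial>lborel)"
    by (rule lborel_pair.Fubini') measurable
  also have "\<dots> = (\<integral>\<^sup>+r. (\<integral>\<^sup>+t. (\<integral>\<^sup>+x. ?F x r t \<partial>lborel) \<partial>lborel) \<partial>lborel)"
    by (intro nn_integral_cong lborel_pair.Fubini') measurable
  also have "\<dots> = (\<integral>\<^sup>+r. (\<integral>\<^sup>+t. (\<integral>\<^sup>+x. indicator {0<..R} r * ennreal r * (indicator {0..2*pi} t *
        (ennreal (f0 x) * (of_bool (x < e) * ennreal (J (x, r, t))) * indicator {0..} x)) \<partial>lborel) \<partial>lborel) \<partial>lborel)"
  proof (rule nn_integral_cong, rule nn_integral_cong, rule nn_integral_cong_AE)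
    fix r t
    have pointwise: "?F x r t = indicator {0<..R} r * ennreal r * (indicator {0..2*pi} t *
            (ennreal (f0 x) * (of_bool (x < e) * ennreal (J (x, r, t))) * indicator {0..} x))" if "x \<noteq> e" for x
    proof -
      consider "x \<in> {0..e}" "r \<in> {0<..R}" | "x \<notin> {0..e}" | "r \<notin> {0..R}" | "r = 0"
        by fastforce
      then show ?thesis
      proof cases
        case 1
        then have "ennreal (J (x, r, t) * r) = ennreal r * ennreal (J (x, r, t))"
          using J01[of x r t] by (simp add: ennreal_mult mult.commute)
        then show ?thesis
          using 1 that by (simp add: indicator_def ac_simps)
      qed (use that in \<open>auto simp: indicator_def\<close>)
    qed
    show "AE x in lborel. ?F x r t = indicator {0<..R} r * ennreal r * (indicator {0..2*pi} t *
            (ennreal (f0 x) * (of_bool (x < e) * ennreal (J (x, r, t))) * indicator {0..} x))"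
      using AE_lborel_singleton[of e] by eventually_elim (rule pointwise)
  qed
  also have "\<dots> = (\<integral>\<^sup>+r. indicator {0<..R} r * ennreal r * (\<integral>\<^sup>+t. indicator {0..2*pi} t *
        (\<integral>\<^sup>+x. ennreal (f0 x) * (of_bool (x < e) * ennreal (J (x, r, t))) * indicator {0..} x \<partial>lborel) \<partial>lborel) \<partial>lborel)"
    by (simp add: nn_integral_cmult)
  finally show ?thesis .
qed

section \<open>The relay model\<close>

lemma space_relay_model [simp]: "space (relay_model mu R) = UNIV"
  unfolding relay_model_def by (simp add: space_pair_measure space_PiM PiE_UNIV_domain)

lemma prob_space_uniform_unit_interval: "prob_space (uniform_measure lborel {0..<1::real})"
  by (rule prob_space_uniform_measure) auto

lemma nn_integral_PiM_component:
  fixes M :: "'a measure"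
  assumes "prob_space M" and [measurable]: "f \<in> borel_measurable M"
  shows "(\<integral>\<^sup>+x. f (x k) \<partial>(\<Pi>\<^sub>M i\<in>(UNIV::nat set). M)) = (\<integral>\<^sup>+y. f y \<partial>M)"
proof -
  have "(\<integral>\<^sup>+y. f y \<partial>M) = (\<integral>\<^sup>+y. f y \<partial>distr (\<Pi>\<^sub>M i\<in>(UNIV::nat set). M) M (\<lambda>\<omega>. \<omega> k))"
    by (subst distr_PiM_component) (use assms in auto)
  also have "\<dots> = (\<integral>\<^sup>+x. f (x k) \<partial>(\<Pi>\<^sub>M i\<in>(UNIV::nat set). M))"
    by (subst nn_integral_distr) auto
  finally show ?thesis ..
qed

lemma nn_integral_relay_fadings:
  fixes \<psi> :: "complex \<times> complex \<times> complex \<times> complex \<Rightarrow> ennreal"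
  assumes R: "R > 0"
  assumes [measurable]: "\<psi> \<in> borel_measurable (borel \<Otimes>\<^sub>M (borel \<Otimes>\<^sub>M (borel \<Otimes>\<^sub>M borel)))"
  shows "(\<integral>\<^sup>+y. \<psi> (fst y k, fst (snd y), fst (snd (snd y)) k, snd (snd (snd y)) k)
            \<partial>((\<Pi>\<^sub>M i\<in>(UNIV::nat set). unif_disc R) \<Otimes>\<^sub>M (CN01 \<Otimes>\<^sub>M ((\<Pi>\<^sub>M i\<in>(UNIV::nat set). CN01) \<Otimes>\<^sub>M (\<Pi>\<^sub>M i\<in>(UNIV::nat set). CN01)))))
       = (\<integral>\<^sup>+w. \<integral>\<^sup>+a. \<integral>\<^sup>+h. \<integral>\<^sup>+g. \<psi> (w, a, h, g) \<partial>CN01 \<partial>CN01 \<partial>CN01 \<partial>unif_disc R)"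
proof -
  let ?Z = "\<Pi>\<^sub>M i\<in>(UNIV::nat set). unif_disc R"
  let ?H = "\<Pi>\<^sub>M i\<in>(UNIV::nat set). CN01"
  have pD: "prob_space (unif_disc R)" using R by (rule prob_space_unif_disc)
  have pC: "prob_space CN01" by (rule prob_space_CN01)
  interpret C: prob_space CN01 by (rule pC)
  have pH: "prob_space ?H" by (rule prob_space_PiM) (rule pC)
  have pZ: "prob_space ?Z" by (rule prob_space_PiM) (rule pD)
  have sCHH: "sigma_finite_measure (CN01 \<Otimes>\<^sub>M (?H \<Otimes>\<^sub>M ?H))"
    by (intro prob_space_imp_sigma_finite prob_space_pair pC pH)
  have sHH: "sigma_finite_measure (?H \<Otimes>\<^sub>M ?H)"
    by (intro prob_space_imp_sigma_finite prob_space_pair pH)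
  have sH: "sigma_finite_measure ?H" by (intro prob_space_imp_sigma_finite pH)
  have "(\<integral>\<^sup>+y. \<psi> (fst y k, fst (snd y), fst (snd (snd y)) k, snd (snd (snd y)) k) \<partial>(?Z \<Otimes>\<^sub>M (CN01 \<Otimes>\<^sub>M (?H \<Otimes>\<^sub>M ?H))))
     = (\<integral>\<^sup>+z. \<integral>\<^sup>+r. \<psi> (z k, fst r, fst (snd r) k, snd (snd r) k) \<partial>(CN01 \<Otimes>\<^sub>M (?H \<Otimes>\<^sub>M ?H)) \<partial>?Z)"
    by (subst sigma_finite_measure.nn_integral_fst[OF sCHH, symmetric]) (auto simp: split_beta')
  also have "\<dots> = (\<integral>\<^sup>+z. \<integral>\<^sup>+a. \<integral>\<^sup>+q. \<psi> (z k, a, fst q k, snd q k) \<partial>(?H \<Otimes>\<^sub>M ?H) \<partial>CN01 \<partial>?Z)"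
    by (intro nn_integral_cong, subst sigma_finite_measure.nn_integral_fst[OF sHH, symmetric]) (auto simp: split_beta')
  also have "\<dots> = (\<integral>\<^sup>+z. \<integral>\<^sup>+a. \<integral>\<^sup>+hh. \<integral>\<^sup>+gg. \<psi> (z k, a, hh k, gg k) \<partial>?H \<partial>?H \<partial>CN01 \<partial>?Z)"
    by (intro nn_integral_cong, subst sigma_finite_measure.nn_integral_fst[OF sH, symmetric]) (auto simp: split_beta')
  also have "\<dots> = (\<integral>\<^sup>+z. \<integral>\<^sup>+a. \<integral>\<^sup>+hh. \<integral>\<^sup>+g. \<psi> (z k, a, hh k, g) \<partial>CN01 \<partial>?H \<partial>CN01 \<partial>?Z)"
    by (intro nn_integral_cong nn_integral_PiM_component[OF pC]) auto
  also have "\<dots> = (\<integral>\<^sup>+z. \<integral>\<^sup>+a. \<integral>\<^sup>+h. \<integral>\<^sup>+g. \<psi> (z k, a, h, g) \<partial>CN01 \<partial>CN01 \<partial>CN01 \<partial>?Z)"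
    by (intro nn_integral_cong nn_integral_PiM_component[OF pC, where f="\<lambda>h. \<integral>\<^sup>+g. \<psi> (_, _, h, g) \<partial>CN01"]) auto
  also have "\<dots> = (\<integral>\<^sup>+w. \<integral>\<^sup>+a. \<integral>\<^sup>+h. \<integral>\<^sup>+g. \<psi> (w, a, h, g) \<partial>CN01 \<partial>CN01 \<partial>CN01 \<partial>unif_disc R)"
    by (rule nn_integral_PiM_component[OF pD, where f="\<lambda>w. \<integral>\<^sup>+a. \<integral>\<^sup>+h. \<integral>\<^sup>+g. \<psi> (w, a, h, g) \<partial>CN01 \<partial>CN01 \<partial>CN01"]) auto
  finally show ?thesis .
qed

text \<open>The index \<open>nat \<lfloor>v * n\<rfloor>\<close> is uniform on \<open>{..<n}\<close> for \<open>v\<close> uniform on \<open>[0, 1)\<close>. The result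
  records the number of relays, the position of the selected relay and the fadings
  \<open>h\<^sub>d, h\<^sub>i, g\<^sub>i\<close>.\<close>
definition selected_relay ::
  "nat \<times> real \<times> (nat \<Rightarrow> complex) \<times> complex \<times> (nat \<Rightarrow> complex) \<times> (nat \<Rightarrow> complex)
     \<Rightarrow> nat \<times> complex \<times> complex \<times> complex \<times> complex" where
  "selected_relay = (\<lambda>(n, v, z, a, h, g). let i = nat \<lfloor>v * real n\<rfloor> in (n, z i, a, h i, g i))"

text \<open>Given \<open>(n, v)\<close> the selected index is fixed, and the i.i.d. positions and fadings at a fixed
  index have the common marginal laws.\<close>
lemma nn_integral_relay_model_selected_relay:
  fixes \<Psi> :: "nat \<times> complex \<times> complex \<times> complex \<times> complex \<Rightarrow> ennreal"
  assumes mu: "mu > 0" and R: "R > 0"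
  assumes [measurable]: "\<Psi> \<in> borel_measurable (count_space UNIV \<Otimes>\<^sub>M (borel \<Otimes>\<^sub>M (borel \<Otimes>\<^sub>M (borel \<Otimes>\<^sub>M borel))))"
  shows "(\<integral>\<^sup>+x. \<Psi> (selected_relay x) \<partial>relay_model mu R) = (\<integral>\<^sup>+n. \<integral>\<^sup>+w. \<integral>\<^sup>+a. \<integral>\<^sup>+h. \<integral>\<^sup>+g. \<Psi> (n, w, a, h, g) \<partial>CN01 \<partial>CN01 \<partial>CN01 \<partial>unif_disc R \<partial>measure_pmf (poisson_pmf mu))"
proof -
  let ?Z = "\<Pi>\<^sub>M i\<in>(UNIV::nat set). unif_disc R"
  let ?H = "\<Pi>\<^sub>M i\<in>(UNIV::nat set). CN01"
  let ?U = "uniform_measure lborel {0..<1::real}"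
  let ?R2 = "?Z \<Otimes>\<^sub>M (CN01 \<Otimes>\<^sub>M (?H \<Otimes>\<^sub>M ?H))"
  let ?P = "measure_pmf (poisson_pmf mu)"
  have pD: "prob_space (unif_disc R)" using R by (rule prob_space_unif_disc)
  have pC: "prob_space CN01" by (rule prob_space_CN01)
  have pH: "prob_space ?H" by (rule prob_space_PiM) (rule pC)
  have pZ: "prob_space ?Z" by (rule prob_space_PiM) (rule pD)
  have pR2: "prob_space ?R2" by (intro prob_space_pair pZ pC pH)
  have pR1: "prob_space (?U \<Otimes>\<^sub>M ?R2)" by (intro prob_space_pair pR2 prob_space_uniform_unit_interval)
  interpret U: prob_space ?U by (rule prob_space_uniform_unit_interval)
  define Kf where "Kf n v = nat \<lfloor>v * real n\<rfloor>" for n :: nat and v :: real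
  have "(\<integral>\<^sup>+x. \<Psi> (fst x, fst (snd (snd x)) (nat \<lfloor>fst (snd x) * real (fst x)\<rfloor>), fst (snd (snd (snd x))),
                  fst (snd (snd (snd (snd x)))) (nat \<lfloor>fst (snd x) * real (fst x)\<rfloor>),
                  snd (snd (snd (snd (snd x)))) (nat \<lfloor>fst (snd x) * real (fst x)\<rfloor>)) \<partial>(?P \<Otimes>\<^sub>M (?U \<Otimes>\<^sub>M ?R2)))
      = (\<integral>\<^sup>+n. \<integral>\<^sup>+y. \<Psi> (n, fst (snd y) (Kf n (fst y)), fst (snd (snd y)),
                  fst (snd (snd (snd y))) (Kf n (fst y)),
                  snd (snd (snd (snd y))) (Kf n (fst y))) \<partial>(?U \<Otimes>\<^sub>M ?R2) \<partial>?P)"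
  proof (subst sigma_finite_measure.nn_integral_fst[OF prob_space_imp_sigma_finite[OF pR1], symmetric])
    show "(\<lambda>x. \<Psi> (fst x, fst (snd (snd x)) (nat \<lfloor>fst (snd x) * real (fst x)\<rfloor>), fst (snd (snd (snd x))),
                  fst (snd (snd (snd (snd x)))) (nat \<lfloor>fst (snd x) * real (fst x)\<rfloor>),
                  snd (snd (snd (snd (snd x)))) (nat \<lfloor>fst (snd x) * real (fst x)\<rfloor>))) \<in> borel_measurable (?P \<Otimes>\<^sub>M (?U \<Otimes>\<^sub>M ?R2))"
      by (rule measurable_compose_countable[where g="\<lambda>x. nat \<lfloor>fst (snd x) * real (fst x)\<rfloor>" and
          f="\<lambda>i x. \<Psi> (fst x, fst (snd (snd x)) i, fst (snd (snd (snd x))), fst (snd (snd (snd (snd x)))) i, snd (snd (snd (snd (snd x)))) i)"])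
         measurable
  qed (simp add: Kf_def)
  also have "\<dots> = (\<integral>\<^sup>+n. \<integral>\<^sup>+v. \<integral>\<^sup>+y. \<Psi> (n, fst y (Kf n v), fst (snd y),
                  fst (snd (snd y)) (Kf n v), snd (snd (snd y)) (Kf n v)) \<partial>?R2 \<partial>?U \<partial>?P)"
  proof (intro nn_integral_cong)
    fix n :: nat
    show "(\<integral>\<^sup>+y. \<Psi> (n, fst (snd y) (Kf n (fst y)), fst (snd (snd y)),
                  fst (snd (snd (snd y))) (Kf n (fst y)),
                  snd (snd (snd (snd y))) (Kf n (fst y))) \<partial>(?U \<Otimes>\<^sub>M ?R2)) =
          (\<integral>\<^sup>+v. \<integral>\<^sup>+y. \<Psi> (n, fst y (Kf n v), fst (snd y),
                  fst (snd (snd y)) (Kf n v), snd (snd (snd y)) (Kf n v)) \<partial>?R2 \<partial>?U)"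
    proof (subst sigma_finite_measure.nn_integral_fst[OF prob_space_imp_sigma_finite[OF pR2], symmetric])
      show "(\<lambda>y. \<Psi> (n, fst (snd y) (Kf n (fst y)), fst (snd (snd y)),
                  fst (snd (snd (snd y))) (Kf n (fst y)),
                  snd (snd (snd (snd y))) (Kf n (fst y)))) \<in> borel_measurable (?U \<Otimes>\<^sub>M ?R2)"
        unfolding Kf_def
        by (rule measurable_compose_countable[where g="\<lambda>y. nat \<lfloor>fst y * real n\<rfloor>" and
          f="\<lambda>i y. \<Psi> (n, fst (snd y) i, fst (snd (snd y)), fst (snd (snd (snd y))) i, snd (snd (snd (snd y))) i)"])
         measurable
    qed simp
  qed
  also have "\<dots> = (\<integral>\<^sup>+n. \<integral>\<^sup>+v. (\<integral>\<^sup>+w. \<integral>\<^sup>+a. \<integral>\<^sup>+h. \<integral>\<^sup>+g. \<Psi> (n, w, a, h, g) \<partial>CN01 \<partial>CN01 \<partial>CN01 \<partial>unif_disc R) \<partial>?U \<partial>?P)"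
    by (intro nn_integral_cong nn_integral_relay_fadings[OF R]) measurable
  also have "\<dots> = (\<integral>\<^sup>+n. \<integral>\<^sup>+w. \<integral>\<^sup>+a. \<integral>\<^sup>+h. \<integral>\<^sup>+g. \<Psi> (n, w, a, h, g) \<partial>CN01 \<partial>CN01 \<partial>CN01 \<partial>unif_disc R \<partial>?P)"
    by (simp add: nn_integral_const U.emeasure_space_1)
  finally show ?thesis unfolding relay_model_def selected_relay_def split_beta' Let_def .
qed

lemma measurable_selected_relay [measurable]:
  "selected_relay \<in> relay_model mu R \<rightarrow>\<^sub>M (count_space UNIV \<Otimes>\<^sub>M (borel \<Otimes>\<^sub>M (borel \<Otimes>\<^sub>M (borel \<Otimes>\<^sub>M borel))))"
proof -
  have K: "(\<lambda>x. nat \<lfloor>fst (snd x) * real (fst x)\<rfloor>) \<in> relay_model mu R \<rightarrow>\<^sub>M count_space UNIV"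
    unfolding relay_model_def by measurable
  have c1: "(\<lambda>x. fst (snd (snd x)) (nat \<lfloor>fst (snd x) * real (fst x)\<rfloor>)) \<in> borel_measurable (relay_model mu R)"
    by (rule measurable_compose_countable[OF _ K, where f="\<lambda>i x. fst (snd (snd x)) i"]) (unfold relay_model_def, measurable)
  have c2: "(\<lambda>x. fst (snd (snd (snd (snd x)))) (nat \<lfloor>fst (snd x) * real (fst x)\<rfloor>)) \<in> borel_measurable (relay_model mu R)"
    by (rule measurable_compose_countable[OF _ K, where f="\<lambda>i x. fst (snd (snd (snd (snd x)))) i"]) (unfold relay_model_def, measurable)
  have c3: "(\<lambda>x. snd (snd (snd (snd (snd x)))) (nat \<lfloor>fst (snd x) * real (fst x)\<rfloor>)) \<in> borel_measurable (relay_model mu R)"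
    by (rule measurable_compose_countable[OF _ K, where f="\<lambda>i x. snd (snd (snd (snd (snd x)))) i"]) (unfold relay_model_def, measurable)
  have c0: "fst \<in> relay_model mu R \<rightarrow>\<^sub>M count_space UNIV" unfolding relay_model_def by measurable
  have c4: "(\<lambda>x. fst (snd (snd (snd x)))) \<in> borel_measurable (relay_model mu R)" unfolding relay_model_def by measurable
  show ?thesis unfolding selected_relay_def split_beta' Let_def
    by (intro measurable_Pair c0 c1 c2 c3 c4)
qed

lemma nn_integral_poisson_eq_0:
  assumes "mu > 0"
  shows "(\<integral>\<^sup>+n. of_bool (n = 0) * c \<partial>measure_pmf (poisson_pmf mu)) = ennreal (exp (- mu)) * c"
proof -
  have "(\<integral>\<^sup>+n. of_bool (n = 0) * c \<partial>measure_pmf (poisson_pmf mu)) = (\<integral>\<^sup>+n. c * indicator {0} n \<partial>measure_pmf (poisson_pmf mu))"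
    by (auto intro!: nn_integral_cong simp: indicator_def)
  also have "\<dots> = c * emeasure (measure_pmf (poisson_pmf mu)) {0}"
    by (rule nn_integral_cmult_indicator) auto
  also have "\<dots> = ennreal (exp (- mu)) * c"
    using assms by (simp add: emeasure_pmf_single mult.commute)
  finally show ?thesis .
qed

lemma nn_integral_poisson_ge_1:
  assumes "mu > 0"
  shows "(\<integral>\<^sup>+n. of_bool (1 \<le> n) * c \<partial>measure_pmf (poisson_pmf mu)) = ennreal (1 - exp (- mu)) * c"
proof -
  have "(\<integral>\<^sup>+n. of_bool (1 \<le> n) * c \<partial>measure_pmf (poisson_pmf mu)) = (\<integral>\<^sup>+n. c * indicator (UNIV - {0}) n \<partial>measure_pmf (poisson_pmf mu))"
    by (auto intro!: nn_integral_cong simp: indicator_def)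
  also have "\<dots> = c * emeasure (measure_pmf (poisson_pmf mu)) (UNIV - {0})"
    by (rule nn_integral_cmult_indicator) auto
  also have "emeasure (measure_pmf (poisson_pmf mu)) (UNIV - {0}) = ennreal (1 - exp (- mu))"
  proof -
    have "measure (measure_pmf (poisson_pmf mu)) (UNIV - {0}) = 1 - measure (measure_pmf (poisson_pmf mu)) {0}"
      using measure_pmf.prob_compl[of "{0}" "poisson_pmf mu"] by simp
    also have "measure (measure_pmf (poisson_pmf mu)) {0} = exp (- mu)"
      using assms by (simp add: measure_pmf_single)
    finally show ?thesis by (simp add: measure_pmf.emeasure_eq_measure)
  qed
  finally show ?thesis by (simp add: mult.commute)
qed


lemma measure_relay_model_selected_relay:
  assumes "0 < mu" "0 < R"
    and [measurable]: "Measurable.pred (count_space UNIV \<Otimes>\<^sub>M (borel \<Otimes>\<^sub>M (borel \<Otimes>\<^sub>M (borel \<Otimes>\<^sub>M borel)))) \<Phi>"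
  shows "measure (relay_model mu R) {x. \<Phi> (selected_relay x)} =
    enn2real (\<integral>\<^sup>+n. \<integral>\<^sup>+w. \<integral>\<^sup>+a. \<integral>\<^sup>+h. \<integral>\<^sup>+g. of_bool (\<Phi> (n, w, a, h, g))
                \<partial>CN01 \<partial>CN01 \<partial>CN01 \<partial>unif_disc R \<partial>measure_pmf (poisson_pmf mu))"
proof -
  have "{x \<in> space (relay_model mu R). \<Phi> (selected_relay x)} \<in> sets (relay_model mu R)"
    by measurable
  then have "{x. \<Phi> (selected_relay x)} \<in> sets (relay_model mu R)"
    by simp
  then have "emeasure (relay_model mu R) {x. \<Phi> (selected_relay x)} = (\<integral>\<^sup>+x. of_bool (\<Phi> (selected_relay x)) \<partial>relay_model mu R)"
    by (simp flip: nn_integral_indicator add: indicator_def of_bool_def)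
  also have "\<dots> = (\<integral>\<^sup>+n. \<integral>\<^sup>+w. \<integral>\<^sup>+a. \<integral>\<^sup>+h. \<integral>\<^sup>+g. of_bool (\<Phi> (n, w, a, h, g))
                \<partial>CN01 \<partial>CN01 \<partial>CN01 \<partial>unif_disc R \<partial>measure_pmf (poisson_pmf mu))"
    using assms by (intro nn_integral_relay_model_selected_relay) measurable
  finally show ?thesis by (simp add: measure_def)
qed

lemma measure_distr_pred:
  assumes X: "X \<in> M \<rightarrow>\<^sub>M N" and D: "distr M N X = N" and S: "{x \<in> space N. P x} \<in> sets N"
  shows "measure M {\<omega> \<in> space M. P (X \<omega>)} = measure N {x \<in> space N. P x}"
proof -
  have "measure N {x \<in> space N. P x} = measure M (X -` {x \<in> space N. P x} \<inter> space M)"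
    by (subst D[symmetric]) (rule measure_distr[OF X S])
  also have "X -` {x \<in> space N. P x} \<inter> space M = {\<omega> \<in> space M. P (X \<omega>)}"
    using measurable_space[OF X] by auto
  finally show ?thesis ..
qed

lemma measure_distr_selected_relay:
  assumes "X \<in> M \<rightarrow>\<^sub>M relay_model mu R" "distr M (relay_model mu R) X = relay_model mu R"
    and [measurable]: "Measurable.pred (count_space UNIV \<Otimes>\<^sub>M (borel \<Otimes>\<^sub>M (borel \<Otimes>\<^sub>M (borel \<Otimes>\<^sub>M borel)))) P"
  shows "measure M {\<omega> \<in> space M. P (selected_relay (X \<omega>))} = measure (relay_model mu R) {x. P (selected_relay x)}"
proof -
  have "{x \<in> space (relay_model mu R). P (selected_relay x)} \<in> sets (relay_model mu R)"
    by measurable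
  then show ?thesis
    using measure_distr_pred[of X M "relay_model mu R" "\<lambda>x. P (selected_relay x)"] assms(1,2) by simp
qed

lemma nn_integral_unif_disc_radial:
  fixes \<phi> :: "real \<Rightarrow> real"
  assumes [measurable]: "\<phi> \<in> borel_measurable borel" and R: "0 < R" and \<phi>: "\<And>r. 0 \<le> \<phi> r \<and> \<phi> r \<le> 1"
  shows "(\<integral>\<^sup>+w. ennreal (\<phi> (cmod w)) \<partial>unif_disc R) = ennreal (2 / R\<^sup>2 * (LBINT r=0..R. \<phi> r * r))"
proof -
  have bounds: "0 \<le> \<phi> r * r \<and> \<phi> r * r \<le> R" if "r \<in> {0..R}" for r
    using \<phi>[of r] that mult_right_mono[of "\<phi> r" 1 r] by auto
  have "(\<integral>\<^sup>+w. ennreal (\<phi> (cmod w)) \<partial>unif_disc R) = ennreal (1 / (pi * R\<^sup>2)) *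
     (\<integral>\<^sup>+r. indicator {0<..R} r * ennreal r * (\<integral>\<^sup>+\<theta>. indicator {0..2*pi} \<theta> * ennreal (\<phi> (cmod (Complex (r * cos \<theta>) (r * sin \<theta>)))) \<partial>lborel) \<partial>lborel)"
    by (rule nn_integral_unif_disc_polar) (use R in auto)
  also have "(\<integral>\<^sup>+r. indicator {0<..R} r * ennreal r * (\<integral>\<^sup>+\<theta>. indicator {0..2*pi} \<theta> * ennreal (\<phi> (cmod (Complex (r * cos \<theta>) (r * sin \<theta>)))) \<partial>lborel) \<partial>lborel)
      = (\<integral>\<^sup>+r. ennreal (2 * pi) * (ennreal (\<phi> r * r) * indicator {0..R} r) \<partial>lborel)"
  proof (rule nn_integral_cong_AE)
    have circle: "(\<integral>\<^sup>+\<theta>. indicator {0..2*pi} \<theta> * ennreal (\<phi> r) \<partial>lborel) = ennreal (\<phi> r) * ennreal (2 * pi)" for r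
      by (subst mult.commute) (simp add: nn_integral_cmult_indicator)
    show "AE r in lborel. indicator {0<..R} r * ennreal r * (\<integral>\<^sup>+\<theta>. indicator {0..2*pi} \<theta> * ennreal (\<phi> (cmod (Complex (r * cos \<theta>) (r * sin \<theta>)))) \<partial>lborel)
        = ennreal (2 * pi) * (ennreal (\<phi> r * r) * indicator {0..R} r)"
      using AE_lborel_singleton[of 0]
      by eventually_elim (use \<phi> circle in \<open>auto simp: norm_Complex_polar indicator_def ennreal_mult mult_ac\<close>)
  qed
  also have "\<dots> = ennreal (2 * pi) * ennreal (LBINT r=0..R. \<phi> r * r)"
  proof -
    have "ennreal (LBINT r=0..R. \<phi> r * r) = (\<integral>\<^sup>+r. ennreal (\<phi> r * r) * indicator {0..R} r \<partial>lborel)"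
      by (rule ennreal_interval_integral_0) (use R bounds in auto)
    then show ?thesis by (simp add: nn_integral_cmult)
  qed
  also have "ennreal (1 / (pi * R\<^sup>2)) * (ennreal (2 * pi) * ennreal (LBINT r=0..R. \<phi> r * r)) =
             ennreal (2 / R\<^sup>2 * (LBINT r=0..R. \<phi> r * r))"
    using R bounds interval_integral_0_nonneg[of R "\<lambda>r. \<phi> r * r"]
    by (simp add: ennreal_mult[symmetric] field_simps)
  finally show ?thesis .
qed

lemma one_minus_exp_neg_nonneg: "0 \<le> a \<Longrightarrow> 0 \<le> b \<Longrightarrow> 0 \<le> 1 - exp (- a * b :: real)"
  using mult_nonneg_nonneg[of a b] by simp

definition link_gain :: "real \<Rightarrow> real \<Rightarrow> complex \<Rightarrow> real" where
  "link_gain alpha r z = (cmod z)\<^sup>2 / (1 + r powr alpha)"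

lemma borel_measurable_link_gain [measurable]:
  assumes [measurable]: "f \<in> borel_measurable M" "z \<in> borel_measurable M"
  shows "(\<lambda>x. link_gain alpha (f x) (z x)) \<in> borel_measurable M"
  unfolding link_gain_def by measurable

lemma nn_integral_CN01_link_gain_less:
  "0 \<le> eps \<Longrightarrow> (\<integral>\<^sup>+a. of_bool (link_gain alpha r a < eps) \<partial>CN01) = ennreal (1 - exp (- (1 + r powr alpha) * eps))"
  unfolding link_gain_def by (rule nn_integral_CN01_gain_less) (auto intro: add_pos_nonneg)

lemma prob_relays_present:
  assumes "0 < mu" "0 < R"
  shows "measure (relay_model mu R) {x. 1 \<le> fst (selected_relay x)} = 1 - exp (- mu)"
proof -
  have "measure (relay_model mu R) {x. 1 \<le> fst (selected_relay x)} =
        enn2real (\<integral>\<^sup>+n. of_bool (1 \<le> n) * 1 \<partial>measure_pmf (poisson_pmf mu))"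
    using measure_relay_model_selected_relay[of mu R "\<lambda>t. 1 \<le> fst t"] assms
    by (simp add: emeasure_unif_disc_UNIV)
  then show ?thesis
    using nn_integral_poisson_ge_1[of mu 1] assms by simp
qed

lemma prob_no_relays_direct_outage:
  assumes "0 < mu" "0 < R" "0 \<le> eps"
  shows "measure (relay_model mu R) {x. case selected_relay x of (n, w, a, h, g) \<Rightarrow> n = 0 \<and> link_gain alpha d a < eps}
    = exp (- mu) * (1 - exp (- (1 + d powr alpha) * eps))"
proof -
  have "(\<integral>\<^sup>+a. of_bool (n = 0 \<and> link_gain alpha d a < eps) \<partial>CN01) =
        of_bool (n = 0) * ennreal (1 - exp (- (1 + d powr alpha) * eps))" for n
    using assms by (cases "n = 0") (simp_all add: nn_integral_CN01_link_gain_less)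
  note inner = this
  have "measure (relay_model mu R) {x. case selected_relay x of (n, w, a, h, g) \<Rightarrow> n = 0 \<and> link_gain alpha d a < eps}
    = enn2real (\<integral>\<^sup>+n. \<integral>\<^sup>+a. of_bool (n = 0 \<and> link_gain alpha d a < eps) \<partial>CN01 \<partial>measure_pmf (poisson_pmf mu))"
    using measure_relay_model_selected_relay[of mu R "\<lambda>(n, w, a, h, g). n = 0 \<and> link_gain alpha d a < eps"] assms
    by (simp add: emeasure_unif_disc_UNIV)
  also have "\<dots> = enn2real (\<integral>\<^sup>+n. of_bool (n = 0) * ennreal (1 - exp (- (1 + d powr alpha) * eps)) \<partial>measure_pmf (poisson_pmf mu))"
    by (simp only: inner)
  also have "\<dots> = exp (- mu) * (1 - exp (- (1 + d powr alpha) * eps))"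
    using assms one_minus_exp_neg_nonneg[of "1 + d powr alpha" eps]
    by (simp add: nn_integral_poisson_eq_0 enn2real_mult)
  finally show ?thesis .
qed

lemma prob_both_hops_fail:
  assumes mu: "0 < mu" and R: "0 < R" and eps: "0 \<le> eps"
  shows "measure (relay_model mu R) {x. case selected_relay x of (n, w, a, h, g) \<Rightarrow>
           link_gain alpha d a < eps \<and> link_gain alpha (cmod w) h < eps \<and> 1 \<le> n}
    = 2 * (1 - exp (- mu)) / R\<^sup>2 *
      (LBINT r=0..R. (1 - exp (- (1 + d powr alpha) * eps)) * (1 - exp (- (1 + r powr alpha) * eps)) * r)"
proof -
  define \<phi> where "\<phi> r = 1 - exp (- (1 + r powr alpha) * eps)" for r
  have \<phi>: "0 \<le> \<phi> r \<and> \<phi> r \<le> 1" for r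
    unfolding \<phi>_def using one_minus_exp_neg_nonneg[of "1 + r powr alpha" eps] eps by (simp add: add_nonneg_nonneg)
  have [measurable]: "\<phi> \<in> borel_measurable borel"
    unfolding \<phi>_def by measurable
  define LB where "LB = (LBINT r=0..R. \<phi> r * r)"
  have LB: "0 \<le> LB"
    unfolding LB_def using R \<phi> by (intro interval_integral_0_nonneg) auto
  have inner: "(\<integral>\<^sup>+w. \<integral>\<^sup>+a. \<integral>\<^sup>+h. \<integral>\<^sup>+g. of_bool (link_gain alpha d a < eps \<and> link_gain alpha (cmod w) h < eps \<and> 1 \<le> n)
                  \<partial>CN01 \<partial>CN01 \<partial>CN01 \<partial>unif_disc R) = of_bool (1 \<le> n) * ennreal (\<phi> d * (2 / R\<^sup>2 * LB))" for n
  proof (cases "1 \<le> n")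
    case True
    have "(\<integral>\<^sup>+a. \<integral>\<^sup>+h. of_bool (link_gain alpha d a < eps \<and> link_gain alpha (cmod w) h < eps) \<partial>CN01 \<partial>CN01) =
          ennreal (\<phi> d) * ennreal (\<phi> (cmod w))" for w
      using eps by (simp add: of_bool_conj nn_integral_cmult nn_integral_multc nn_integral_CN01_link_gain_less \<phi>_def)
    then have "(\<integral>\<^sup>+w. \<integral>\<^sup>+a. \<integral>\<^sup>+h. \<integral>\<^sup>+g. of_bool (link_gain alpha d a < eps \<and> link_gain alpha (cmod w) h < eps \<and> 1 \<le> n)
                  \<partial>CN01 \<partial>CN01 \<partial>CN01 \<partial>unif_disc R) = (\<integral>\<^sup>+w. ennreal (\<phi> d) * ennreal (\<phi> (cmod w)) \<partial>unif_disc R)"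
      using True by simp
    also have "\<dots> = ennreal (\<phi> d) * ennreal (2 / R\<^sup>2 * LB)"
      unfolding LB_def using R \<phi> by (simp add: nn_integral_cmult nn_integral_unif_disc_radial)
    finally show ?thesis
      using True \<phi>[of d] LB by (simp add: ennreal_mult[symmetric] mult.assoc)
  qed simp
  have "measure (relay_model mu R) {x. case selected_relay x of (n, w, a, h, g) \<Rightarrow>
           link_gain alpha d a < eps \<and> link_gain alpha (cmod w) h < eps \<and> 1 \<le> n} =
        enn2real (\<integral>\<^sup>+n. \<integral>\<^sup>+w. \<integral>\<^sup>+a. \<integral>\<^sup>+h. \<integral>\<^sup>+g. of_bool (link_gain alpha d a < eps \<and> link_gain alpha (cmod w) h < eps \<and> 1 \<le> n)
                  \<partial>CN01 \<partial>CN01 \<partial>CN01 \<partial>unif_disc R \<partial>measure_pmf (poisson_pmf mu))"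
    using measure_relay_model_selected_relay[of mu R "\<lambda>(n, w, a, h, g). link_gain alpha d a < eps \<and> link_gain alpha (cmod w) h < eps \<and> 1 \<le> n"] mu R
    by simp
  also have "\<dots> = enn2real (\<integral>\<^sup>+n. of_bool (1 \<le> n) * ennreal (\<phi> d * (2 / R\<^sup>2 * LB)) \<partial>measure_pmf (poisson_pmf mu))"
    by (simp only: inner)
  also have "\<dots> = (1 - exp (- mu)) * (\<phi> d * (2 / R\<^sup>2 * LB))"
    using mu \<phi>[of d] LB nn_integral_poisson_ge_1[of mu "ennreal (\<phi> d * (2 / R\<^sup>2 * LB))"]
    by (simp add: enn2real_mult)
  finally show ?thesis
    by (simp add: LB_def \<phi>_def mult.assoc)
qed

text \<open>Given \<open>x\<^sub>0 = x\<close> and the selected relay at polar position \<open>(r, \<theta>)\<close>, the probability that the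
  relay decodes but the combined signal is still in outage.\<close>
definition relay_outage_prob :: "real \<Rightarrow> real \<Rightarrow> real \<Rightarrow> real \<Rightarrow> real \<Rightarrow> real \<Rightarrow> real \<Rightarrow> real" where
  "relay_outage_prob alpha d eta eps x r \<theta> = exp (- (1 + r powr alpha) * eps) *
     (1 - bessel_factor ((1 + (r\<^sup>2 + d\<^sup>2 - 2 * r * d * cos \<theta>) powr (alpha / 2)) * (1 + r powr alpha) * (eps - x) / eta))"

lemma relay_outage_prob_bounds:
  assumes "0 < eta" "0 \<le> eps" "x \<le> eps"
  shows "0 \<le> relay_outage_prob alpha d eta eps x r \<theta> \<and> relay_outage_prob alpha d eta eps x r \<theta> \<le> 1"
proof -
  define A where "A = (1 + (r\<^sup>2 + d\<^sup>2 - 2 * r * d * cos \<theta>) powr (alpha / 2)) * (1 + r powr alpha) * (eps - x) / eta"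
  have "0 \<le> A"
    unfolding A_def using assms by (auto intro!: divide_nonneg_pos mult_nonneg_nonneg add_nonneg_nonneg)
  then have "0 \<le> 1 - bessel_factor A" "1 - bessel_factor A \<le> 1"
    using bessel_factor_nonneg bessel_factor_le_1 by auto
  moreover have "exp (- (1 + r powr alpha) * eps) \<le> 1"
    using one_minus_exp_neg_nonneg[of "1 + r powr alpha" eps] assms by (simp add: add_nonneg_nonneg)
  ultimately show ?thesis
    unfolding relay_outage_prob_def A_def[symmetric] by (auto intro: mult_le_one)
qed

lemma nn_integral_unif_disc_relay_outage:
  assumes R: "0 < R" and eta: "0 < eta" and e: "0 < eps"
  shows "(\<integral>\<^sup>+w. \<integral>\<^sup>+a. \<integral>\<^sup>+h. \<integral>\<^sup>+g. of_bool (link_gain alpha d a + eta * link_gain alpha (cmod (w - of_real d)) g * (link_gain alpha (cmod w) h - eps) < eps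
                                      \<and> eps < link_gain alpha (cmod w) h) \<partial>CN01 \<partial>CN01 \<partial>CN01 \<partial>unif_disc R)
   = ennreal (1 / (pi * R\<^sup>2)) * (\<integral>\<^sup>+r. indicator {0<..R} r * ennreal r * (\<integral>\<^sup>+t. indicator {0..2*pi} t *
        (\<integral>\<^sup>+x. ennreal ((1 + d powr alpha) * exp (- (1 + d powr alpha) * x)) *
            (of_bool (x < eps) * ennreal (relay_outage_prob alpha d eta eps x r t)) * indicator {0..} x \<partial>lborel) \<partial>lborel) \<partial>lborel)"
proof -
  define rho where "rho = 1 + d powr alpha"
  have rho: "rho > 0" unfolding rho_def by (simp add: add_pos_nonneg)
  define Bw where "Bw w = 1 + cmod w powr alpha" for w :: complex
  define Cw where "Cw w = 1 + cmod (w - complex_of_real d) powr alpha" for w :: complex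
  have Bw: "Bw w > 0" and Cw: "Cw w > 0" for w unfolding Bw_def Cw_def by (simp_all add: add_pos_nonneg)
  have [measurable]: "Bw \<in> borel_measurable borel" "Cw \<in> borel_measurable borel"
    unfolding Bw_def[abs_def] Cw_def[abs_def] by measurable
  define Hf where "Hf w x = of_bool (x < eps) * ennreal (exp (- Bw w * eps) * (1 - bessel_factor (Cw w * Bw w * (eps - x) / eta)))" for w x
  have [measurable]: "(\<lambda>(w, x). Hf w x) \<in> borel_measurable (borel \<Otimes>\<^sub>M borel)"
    unfolding Hf_def split_beta' by measurable
  have polar: "Hf (Complex (r * cos t) (r * sin t)) x = of_bool (x < eps) * ennreal (relay_outage_prob alpha d eta eps x r t)"
    if "r > 0" for r t x
    using that by (simp add: Hf_def Bw_def Cw_def relay_outage_prob_def norm_Complex_polar norm_Complex_polar_minus_powr)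
  have "(\<integral>\<^sup>+w. \<integral>\<^sup>+a. \<integral>\<^sup>+h. \<integral>\<^sup>+g. of_bool (link_gain alpha d a + eta * link_gain alpha (cmod (w - of_real d)) g * (link_gain alpha (cmod w) h - eps) < eps
                                      \<and> eps < link_gain alpha (cmod w) h) \<partial>CN01 \<partial>CN01 \<partial>CN01 \<partial>unif_disc R)
      = (\<integral>\<^sup>+w. \<integral>\<^sup>+a. Hf w ((cmod a)\<^sup>2 / rho) \<partial>CN01 \<partial>unif_disc R)"
    unfolding Hf_def link_gain_def rho_def Bw_def Cw_def
    by (intro nn_integral_cong nn_integral_relay_outage eta e Cw[unfolded Cw_def] Bw[unfolded Bw_def])
  also have "\<dots> = (\<integral>\<^sup>+w. \<integral>\<^sup>+x. ennreal (rho * exp (- rho * x)) * Hf w x * indicator {0..} x \<partial>lborel \<partial>unif_disc R)"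
    by (intro nn_integral_cong nn_integral_CN01_gain rho) measurable
  also have "\<dots> = ennreal (1 / (pi * R\<^sup>2)) * (\<integral>\<^sup>+r. indicator {0<..R} r * ennreal r * (\<integral>\<^sup>+t. indicator {0..2*pi} t *
        (\<integral>\<^sup>+x. ennreal (rho * exp (- rho * x)) * Hf (Complex (r * cos t) (r * sin t)) x * indicator {0..} x \<partial>lborel) \<partial>lborel) \<partial>lborel)"
    by (rule nn_integral_unif_disc_polar[OF _ R]) measurable
  also have "\<dots> = ennreal (1 / (pi * R\<^sup>2)) * (\<integral>\<^sup>+r. indicator {0<..R} r * ennreal r * (\<integral>\<^sup>+t. indicator {0..2*pi} t *
        (\<integral>\<^sup>+x. ennreal ((1 + d powr alpha) * exp (- (1 + d powr alpha) * x)) *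
            (of_bool (x < eps) * ennreal (relay_outage_prob alpha d eta eps x r t)) * indicator {0..} x \<partial>lborel) \<partial>lborel) \<partial>lborel)"
  proof -
    have "indicator {0<..R} r * ennreal r * (\<integral>\<^sup>+t. indicator {0..2*pi} t *
            (\<integral>\<^sup>+x. ennreal (rho * exp (- rho * x)) * Hf (Complex (r * cos t) (r * sin t)) x * indicator {0..} x \<partial>lborel) \<partial>lborel)
        = indicator {0<..R} r * ennreal r * (\<integral>\<^sup>+t. indicator {0..2*pi} t *
            (\<integral>\<^sup>+x. ennreal ((1 + d powr alpha) * exp (- (1 + d powr alpha) * x)) *
              (of_bool (x < eps) * ennreal (relay_outage_prob alpha d eta eps x r t)) * indicator {0..} x \<partial>lborel) \<partial>lborel)" for r
    proof (cases "0 < r")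
      case True
      then show ?thesis by (simp only: polar rho_def)
    qed simp
    then show ?thesis by simp
  qed
  finally show ?thesis .
qed

lemma prob_relay_outage:
  assumes mu: "0 < mu" and R: "0 < R" and eta: "0 < eta" and eps: "0 < eps"
  shows "measure (relay_model mu R) {x. case selected_relay x of (n, w, a, h, g) \<Rightarrow>
           (link_gain alpha d a + eta * link_gain alpha (cmod (w - of_real d)) g * (link_gain alpha (cmod w) h - eps) < eps
              \<and> eps < link_gain alpha (cmod w) h) \<and> 1 \<le> n}
    = (1 - exp (- mu)) / (pi * R\<^sup>2) *
      (LBINT x=0..eps. (LBINT r=0..R. (LBINT \<theta>=0..2*pi. relay_outage_prob alpha d eta eps x r \<theta> * r))
                       * ((1 + d powr alpha) * exp (- (1 + d powr alpha) * x)))"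
proof -
  define rho where "rho = 1 + d powr alpha"
  have rho: "0 < rho" unfolding rho_def by (simp add: add_pos_nonneg)
  define J where "J = (\<lambda>(x, r, \<theta>). relay_outage_prob alpha d eta eps x r \<theta>)"
  have J_measurable [measurable]: "J \<in> borel_measurable borel"
  proof -
    have "J \<in> borel_measurable (borel \<Otimes>\<^sub>M (borel \<Otimes>\<^sub>M borel))"
      unfolding J_def relay_outage_prob_def by measurable
    then show ?thesis by (simp add: borel_prod)
  qed
  define Lt where "Lt = (LBINT x=0..eps. (LBINT r=0..R. (LBINT \<theta>=0..2*pi. J (x, r, \<theta>) * r)) * (rho * exp (- rho * x)))"
  have f_bounds: "0 \<le> rho * exp (- rho * x) \<and> rho * exp (- rho * x) \<le> rho" if "x \<in> {0..eps}" for x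
    using rho that mult_left_le[of "exp (- rho * x)" rho] by auto
  have Lt: "ennreal Lt = (\<integral>\<^sup>+r. indicator {0<..R} r * ennreal r * (\<integral>\<^sup>+t. indicator {0..2*pi} t *
        (\<integral>\<^sup>+x. ennreal (rho * exp (- rho * x)) * (of_bool (x < eps) * ennreal (J (x, r, t))) * indicator {0..} x \<partial>lborel) \<partial>lborel) \<partial>lborel)"
    unfolding Lt_def
    by (rule ennreal_iterated_interval_integral_polar[OF J_measurable _ _ _ _ f_bounds])
       (use eps R eta relay_outage_prob_bounds in \<open>auto simp: J_def\<close>)
  have "0 \<le> Lt"
    unfolding Lt_def using eps R rho relay_outage_prob_bounds[OF eta]
    by (intro interval_integral_0_nonneg mult_nonneg_nonneg) (auto simp: J_def)
  have inner: "(\<integral>\<^sup>+w. \<integral>\<^sup>+a. \<integral>\<^sup>+h. \<integral>\<^sup>+g. of_bool ((link_gain alpha d a + eta * link_gain alpha (cmod (w - of_real d)) g * (link_gain alpha (cmod w) h - eps) < eps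
                                      \<and> eps < link_gain alpha (cmod w) h) \<and> 1 \<le> n) \<partial>CN01 \<partial>CN01 \<partial>CN01 \<partial>unif_disc R)
      = of_bool (1 \<le> n) * (ennreal (1 / (pi * R\<^sup>2)) * ennreal Lt)" for n
    using nn_integral_unif_disc_relay_outage[OF R eta eps, of alpha d] by (cases "1 \<le> n") (simp_all add: Lt J_def rho_def)
  have "measure (relay_model mu R) {x. case selected_relay x of (n, w, a, h, g) \<Rightarrow>
           (link_gain alpha d a + eta * link_gain alpha (cmod (w - of_real d)) g * (link_gain alpha (cmod w) h - eps) < eps
              \<and> eps < link_gain alpha (cmod w) h) \<and> 1 \<le> n} =
        enn2real (\<integral>\<^sup>+n. \<integral>\<^sup>+w. \<integral>\<^sup>+a. \<integral>\<^sup>+h. \<integral>\<^sup>+g. of_bool ((link_gain alpha d a + eta * link_gain alpha (cmod (w - of_real d)) g * (link_gain alpha (cmod w) h - eps) < eps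
                                      \<and> eps < link_gain alpha (cmod w) h) \<and> 1 \<le> n) \<partial>CN01 \<partial>CN01 \<partial>CN01 \<partial>unif_disc R \<partial>measure_pmf (poisson_pmf mu))"
    using measure_relay_model_selected_relay[of mu R "\<lambda>(n, w, a, h, g). (link_gain alpha d a + eta * link_gain alpha (cmod (w - of_real d)) g * (link_gain alpha (cmod w) h - eps) < eps
              \<and> eps < link_gain alpha (cmod w) h) \<and> 1 \<le> n"] mu R
    by simp
  also have "\<dots> = enn2real (\<integral>\<^sup>+n. of_bool (1 \<le> n) * (ennreal (1 / (pi * R\<^sup>2)) * ennreal Lt) \<partial>measure_pmf (poisson_pmf mu))"
    by (simp only: inner)
  also have "\<dots> = (1 - exp (- mu)) / (pi * R\<^sup>2) * Lt"
    using mu \<open>0 \<le> Lt\<close> nn_integral_poisson_ge_1[of mu "ennreal (1 / (pi * R\<^sup>2)) * ennreal Lt"]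
    by (simp add: enn2real_mult)
  finally show ?thesis
    by (simp add: Lt_def J_def rho_def)
qed

theorem theorem1:
  fixes M :: "'s measure"
    and N :: "'s \<Rightarrow> nat" and V :: "'s \<Rightarrow> real" and Z :: "'s \<Rightarrow> nat \<Rightarrow> complex"
    and hd :: "'s \<Rightarrow> complex" and h g :: "'s \<Rightarrow> nat \<Rightarrow> complex"
    and d lam RD alpha Pw Rt eta tau eps :: real
    and I :: "'s \<Rightarrow> nat" and x0 xi yi :: "'s \<Rightarrow> real"
    and f0 :: "real \<Rightarrow> real" and q :: "real \<Rightarrow> real \<Rightarrow> real \<Rightarrow> real"
  assumes "prob_space M"
    and "0 < d" and "0 < lam" and "0 < RD" and "0 < alpha" and "0 < Pw" and "0 < Rt"
    and "0 < eta" and "eta \<le> 1"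
    and "(\<lambda>\<omega>. (N \<omega>, V \<omega>, Z \<omega>, hd \<omega>, h \<omega>, g \<omega>)) \<in> M \<rightarrow>\<^sub>M relay_model (pi * RD\<^sup>2 * lam) RD"
    and "distr M (relay_model (pi * RD\<^sup>2 * lam) RD) (\<lambda>\<omega>. (N \<omega>, V \<omega>, Z \<omega>, hd \<omega>, h \<omega>, g \<omega>))
           = relay_model (pi * RD\<^sup>2 * lam) RD"
    and "tau = 2 powr (2 * Rt) - 1"
    and "eps = tau / Pw"
    and "I = (\<lambda>\<omega>. nat \<lfloor>V \<omega> * real (N \<omega>)\<rfloor>)"
    and "x0 = (\<lambda>\<omega>. (cmod (hd \<omega>))\<^sup>2 / (1 + d powr alpha))"
    and "xi = (\<lambda>\<omega>. (cmod (h \<omega> (I \<omega>)))\<^sup>2 / (1 + cmod (Z \<omega> (I \<omega>)) powr alpha))"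
    and "yi = (\<lambda>\<omega>. (cmod (g \<omega> (I \<omega>)))\<^sup>2 / (1 + cmod (Z \<omega> (I \<omega>) - complex_of_real d) powr alpha))"
    and "f0 = (\<lambda>x::real. (1 + d powr alpha) * exp (- (1 + d powr alpha) * x))"
    and "q = (\<lambda>x r \<theta>::real. sqrt ((1 + (r\<^sup>2 + d\<^sup>2 - 2 * r * d * cos \<theta>) powr (alpha / 2))
                                   * (1 + r powr alpha) * (eps - x) / eta))"
  shows "measure M {\<omega> \<in> space M. N \<omega> = 0 \<and> x0 \<omega> < eps}
         + measure M {\<omega> \<in> space M. 1 \<le> N \<omega>}
           * cond_prob M (\<lambda>\<omega>. x0 \<omega> + eta * yi \<omega> * (xi \<omega> - eps) < eps \<and> xi \<omega> > eps)
                         (\<lambda>\<omega>. 1 \<le> N \<omega>)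
         + measure M {\<omega> \<in> space M. x0 \<omega> < eps \<and> xi \<omega> < eps \<and> 1 \<le> N \<omega>}
       = (1 - exp (- (1 + d powr alpha) * eps)) * exp (- pi * RD\<^sup>2 * lam)
         + (1 - exp (- pi * RD\<^sup>2 * lam)) / (pi * RD\<^sup>2)
           * (LBINT x=0..eps. (LBINT r=0..RD. (LBINT \<theta>=0..2*pi.
                 exp (- (1 + r powr alpha) * eps)
                 * (1 - 2 * q x r \<theta> * bessel_K1 (2 * q x r \<theta>)) * r)) * f0 x)
         + 2 * (1 - exp (- pi * RD\<^sup>2 * lam)) / RD\<^sup>2
           * (LBINT r=0..RD. (1 - exp (- (1 + d powr alpha) * eps))
                             * (1 - exp (- (1 + r powr alpha) * eps)) * r)"
proof -
  define mu where "mu = pi * RD\<^sup>2 * lam"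
  have mu: "0 < mu" and RD: "0 < RD" and eta: "0 < eta"
    using assms by (simp_all add: mu_def)
  have "1 < (2::real) powr (2 * Rt)"
    using powr_less_mono[of 0 "2 * Rt" 2] assms(7) by simp
  then have eps: "0 < eps"
    using assms(6,12,13) by simp
  let ?X = "\<lambda>\<omega>. (N \<omega>, V \<omega>, Z \<omega>, hd \<omega>, h \<omega>, g \<omega>)"
  note law = measure_distr_selected_relay[of ?X M mu RD, OF assms(10,11)[folded mu_def]]
  have selected: "selected_relay (?X \<omega>) = (N \<omega>, Z \<omega> (I \<omega>), hd \<omega>, h \<omega> (I \<omega>), g \<omega> (I \<omega>))" for \<omega>
    by (simp add: selected_relay_def Let_def assms(14))
  have gains: "x0 \<omega> = link_gain alpha d (hd \<omega>)" "xi \<omega> = link_gain alpha (cmod (Z \<omega> (I \<omega>))) (h \<omega> (I \<omega>))"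
    "yi \<omega> = link_gain alpha (cmod (Z \<omega> (I \<omega>) - of_real d)) (g \<omega> (I \<omega>))" for \<omega>
    by (simp_all add: assms(15-17) link_gain_def)
  have "measure M {\<omega> \<in> space M. N \<omega> = 0 \<and> x0 \<omega> < eps} = exp (- mu) * (1 - exp (- (1 + d powr alpha) * eps))"
    using law[of "\<lambda>(n, w, a, h, g). n = 0 \<and> link_gain alpha d a < eps"] prob_no_relays_direct_outage[OF mu RD, of eps alpha d] eps
    by (simp add: selected gains)
  moreover have "measure M {\<omega> \<in> space M. 1 \<le> N \<omega>} = 1 - exp (- mu)"
    using law[of "\<lambda>t. 1 \<le> fst t"] prob_relays_present[OF mu RD] by (simp add: selected)
  moreover have "measure M {\<omega> \<in> space M. (x0 \<omega> + eta * yi \<omega> * (xi \<omega> - eps) < eps \<and> xi \<omega> > eps) \<and> 1 \<le> N \<omega>} =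
      (1 - exp (- mu)) / (pi * RD\<^sup>2) *
      (LBINT x=0..eps. (LBINT r=0..RD. (LBINT \<theta>=0..2*pi. relay_outage_prob alpha d eta eps x r \<theta> * r)) * f0 x)"
    using law[of "\<lambda>(n, w, a, h, g). (link_gain alpha d a + eta * link_gain alpha (cmod (w - of_real d)) g * (link_gain alpha (cmod w) h - eps) < eps
              \<and> eps < link_gain alpha (cmod w) h) \<and> 1 \<le> n"] prob_relay_outage[OF mu RD eta eps, of alpha d]
    by (simp add: selected gains assms(18))
  moreover have "measure M {\<omega> \<in> space M. x0 \<omega> < eps \<and> xi \<omega> < eps \<and> 1 \<le> N \<omega>} =
      2 * (1 - exp (- mu)) / RD\<^sup>2 *
      (LBINT r=0..RD. (1 - exp (- (1 + d powr alpha) * eps)) * (1 - exp (- (1 + r powr alpha) * eps)) * r)"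
    using law[of "\<lambda>(n, w, a, h, g). link_gain alpha d a < eps \<and> link_gain alpha (cmod w) h < eps \<and> 1 \<le> n"]
      prob_both_hops_fail[OF mu RD, of eps alpha d] eps
    by (simp add: selected gains)
  moreover have "relay_outage_prob alpha d eta eps x r \<theta> = exp (- (1 + r powr alpha) * eps) * (1 - 2 * q x r \<theta> * bessel_K1 (2 * q x r \<theta>))"
    for x r \<theta>
    by (simp add: relay_outage_prob_def bessel_factor_def assms(19) mult.assoc)
  moreover have "0 < 1 - exp (- mu)"
    using mu by simp
  ultimately show ?thesis
    by (simp add: cond_prob_def mu_def mult.commute)
qed

end
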